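(* Let $\mathbb K$ be an infinite field, $\mathcal N$ a vector space over $\mathbb K$, and $f:(\mathbb K^d)_{\mathrm{nc}}\to\mathcal N_{\mathrm{nc}}$ a nc function such that for each $n$, $f(X_1,\dots,X_d)$ is a polynomial function of degree $L_n$ in the $dn^2$ commuting variables $(X_i)_{jk}$ ($i=1,\dots,d$; $j,k=1,\dots,n$) with values in $\mathcal N^{n\times n}$ (with the convention $\deg0=-\infty$). Then there exists a unique sequence of homogeneous nc polynomials $f_j\in\mathcal N\langle x_1,\dots,x_d\rangle$ of degree $j$, $j=0,1,\dots$, such that for all $n\in\mathbb N$: $f_j$ vanishes on $(\mathbb K^{n\times n})^d$ for all $j>L_n$; if $L_n>-\infty$ then $f_{L_n}$ does not vanish identically on $(\mathbb K^{n\times n})^d$; and for $X\in(\mathbb K^{n\times n})^d$, $$f(X)=\sum_{j=0}^\infty f_j(X)=\sum_{j=0}^{L_n}f_j(X).$$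
   Context: $n\times n$ matrices over $\mathbb K^d$ are identified with $d$-tuples $X=(X_1,\dots,X_d)$ of $n\times n$ matrices over $\mathbb K$; $(\mathbb K^d)_{\mathrm{nc}}=\coprod_n(\mathbb K^{n\times n})^d$, $\mathcal N_{\mathrm{nc}}=\coprod_n\mathcal N^{n\times n}$. A nc function $f$ satisfies $f((\mathbb K^{n\times n})^d)\subseteq\mathcal N^{n\times n}$, $f(X\oplus Y)=f(X)\oplus f(Y)$ (componentwise block diagonal direct sums), and $f(SXS^{-1})=Sf(X)S^{-1}$ for invertible $S\in\mathbb K^{n\times n}$. $\mathcal G_d$ is the free monoid on $g_1,\dots,g_d$; for $w=g_{i_1}\cdots g_{i_\ell}$, $|w|=\ell$, $x^w=x_{i_1}\cdots x_{i_\ell}$, $X^w=X_{i_1}\cdots X_{i_\ell}$. A homogeneous nc polynomial of degree $j$ with coefficients in $\mathcal N$ is a finite formal sum $p=\sum_{|w|=j}p_wx^w$ with $p_w\in\mathcal N$ (possibly all zero); it is evaluated by $p(X)=\sum_{|w|=j}X^wp_w\in\mathcal N^{n\times n}$, where $(X^wp_w)_{ab}=(X^w)_{ab}p_w$. *)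

theory Defs
  imports Main "HOL.Vector_Spaces" "HOL-Library.Poly_Mapping"
begin

text \<open>An n x n matrix over a type 'a is a function nat => nat => 'a of which
only the entries (a,b) with a,b < n are relevant. A d-tuple of matrices X is a function
nat => nat => nat => 'k, X i being the i-th matrix (i < d). A nc function is a family
f n :: (nat => nat => nat => 'k) => (nat => nat => 'n), indexed by the size n.\<close>

definition idm :: "nat \<Rightarrow> nat \<Rightarrow> nat \<Rightarrow> 'k::{zero,one}" where
  "idm n a b = (if a = b \<and> a < n then 1 else 0)"

definition mmult :: "nat \<Rightarrow> (nat \<Rightarrow> nat \<Rightarrow> 'k::semiring_0) \<Rightarrow> (nat \<Rightarrow> nat \<Rightarrow> 'k) \<Rightarrow> nat \<Rightarrow> nat \<Rightarrow> 'k" where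
  "mmult n A B = (\<lambda>a b. \<Sum>c<n. A a c * B c b)"

definition minv :: "nat \<Rightarrow> (nat \<Rightarrow> nat \<Rightarrow> 'k::semiring_1) \<Rightarrow> (nat \<Rightarrow> nat \<Rightarrow> 'k) \<Rightarrow> bool" where
  "minv n S T = (\<forall>a<n. \<forall>b<n. mmult n S T a b = idm n a b \<and> mmult n T S a b = idm n a b)"

definition lact :: "('k \<Rightarrow> 'n \<Rightarrow> 'n) \<Rightarrow> nat \<Rightarrow> (nat \<Rightarrow> nat \<Rightarrow> 'k) \<Rightarrow> (nat \<Rightarrow> nat \<Rightarrow> 'n::comm_monoid_add) \<Rightarrow> nat \<Rightarrow> nat \<Rightarrow> 'n" where
  "lact sc n S M = (\<lambda>a b. \<Sum>c<n. sc (S a c) (M c b))"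

definition ract :: "('k \<Rightarrow> 'n \<Rightarrow> 'n) \<Rightarrow> nat \<Rightarrow> (nat \<Rightarrow> nat \<Rightarrow> 'n::comm_monoid_add) \<Rightarrow> (nat \<Rightarrow> nat \<Rightarrow> 'k) \<Rightarrow> nat \<Rightarrow> nat \<Rightarrow> 'n" where
  "ract sc n M T = (\<lambda>a b. \<Sum>c<n. sc (T c b) (M a c))"

definition blockdiag :: "nat \<Rightarrow> (nat \<Rightarrow> nat \<Rightarrow> 'a::zero) \<Rightarrow> (nat \<Rightarrow> nat \<Rightarrow> 'a) \<Rightarrow> nat \<Rightarrow> nat \<Rightarrow> 'a" where
  "blockdiag n A B = (\<lambda>a b. if a < n \<and> b < n then A a b
                            else if n \<le> a \<and> n \<le> b then B (a - n) (b - n) else 0)"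

definition nc_function :: "('k::field \<Rightarrow> 'n::ab_group_add \<Rightarrow> 'n) \<Rightarrow> nat \<Rightarrow>
    (nat \<Rightarrow> (nat \<Rightarrow> nat \<Rightarrow> nat \<Rightarrow> 'k) \<Rightarrow> nat \<Rightarrow> nat \<Rightarrow> 'n) \<Rightarrow> bool" where
  "nc_function sc d f \<longleftrightarrow>
     (\<forall>n m X Y. \<forall>a<n+m. \<forall>b<n+m.
        f (n + m) (\<lambda>i. blockdiag n (X i) (Y i)) a b = blockdiag n (f n X) (f m Y) a b) \<and>
     (\<forall>n S T X. minv n S T \<longrightarrow> (\<forall>a<n. \<forall>b<n.
        f n (\<lambda>i. mmult n (mmult n S (X i)) T) a b = ract sc n (lact sc n S (f n X)) T a b))"

text \<open>Commutative polynomials with coefficients in 'n in variables of type 'v,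
  as finitely supported maps from monomials (exponent vectors) to coefficients.\<close>
definition mdeg :: "('v \<Rightarrow>\<^sub>0 nat) \<Rightarrow> nat" where
  "mdeg \<alpha> = (\<Sum>v\<in>Poly_Mapping.keys \<alpha>. Poly_Mapping.lookup \<alpha> v)"

definition peval :: "('k::comm_semiring_1 \<Rightarrow> 'n \<Rightarrow> 'n) \<Rightarrow> (('v \<Rightarrow>\<^sub>0 nat) \<Rightarrow>\<^sub>0 'n::comm_monoid_add) \<Rightarrow> ('v \<Rightarrow> 'k) \<Rightarrow> 'n" where
  "peval sc P x = (\<Sum>\<alpha>\<in>Poly_Mapping.keys P. sc (\<Prod>v\<in>Poly_Mapping.keys \<alpha>. x v ^ Poly_Mapping.lookup \<alpha> v) (Poly_Mapping.lookup P \<alpha>))"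

definition mvars :: "nat \<Rightarrow> nat \<Rightarrow> (nat \<times> nat \<times> nat) set" where
  "mvars d n = {(i, j, k). i < d \<and> j < n \<and> k < n}"

text \<open>Degree of an n x n matrix of polynomials Q: None stands for -infinity (all entries zero).\<close>
definition mat_poly_degree :: "nat \<Rightarrow> (nat \<Rightarrow> nat \<Rightarrow> (('v \<Rightarrow>\<^sub>0 nat) \<Rightarrow>\<^sub>0 'n::zero)) \<Rightarrow> nat option \<Rightarrow> bool" where
  "mat_poly_degree n Q L = (case L of
      None \<Rightarrow> (\<forall>a<n. \<forall>b<n. Q a b = 0)
    | Some D \<Rightarrow> (\<forall>a<n. \<forall>b<n. \<forall>\<alpha>\<in>Poly_Mapping.keys (Q a b). mdeg \<alpha> \<le> D) \<and>
                (\<exists>a<n. \<exists>b<n. \<exists>\<alpha>\<in>Poly_Mapping.keys (Q a b). mdeg \<alpha> = D))"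

definition is_poly_fun_deg :: "('k::comm_semiring_1 \<Rightarrow> 'n \<Rightarrow> 'n) \<Rightarrow> nat \<Rightarrow> nat \<Rightarrow>
    ((nat \<Rightarrow> nat \<Rightarrow> nat \<Rightarrow> 'k) \<Rightarrow> nat \<Rightarrow> nat \<Rightarrow> 'n::comm_monoid_add) \<Rightarrow> nat option \<Rightarrow> bool" where
  "is_poly_fun_deg sc d n g L \<longleftrightarrow>
     (\<exists>Q. (\<forall>a<n. \<forall>b<n. \<forall>\<alpha>\<in>Poly_Mapping.keys (Q a b). Poly_Mapping.keys \<alpha> \<subseteq> mvars d n) \<and>
          mat_poly_degree n Q L \<and>
          (\<forall>X. \<forall>a<n. \<forall>b<n. g X a b = peval sc (Q a b) (\<lambda>(i, j, k). X i j k)))"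

text \<open>Words in the free monoid on g_0..g_{d-1} of length j, represented as lists of indices.
  A homogeneous nc polynomial of degree j is a coefficient function on words, zero off
  the words of length j.\<close>
definition words :: "nat \<Rightarrow> nat \<Rightarrow> nat list set" where
  "words d j = {w. length w = j \<and> set w \<subseteq> {..<d}}"

definition hom_ncpoly :: "nat \<Rightarrow> nat \<Rightarrow> (nat list \<Rightarrow> 'n::zero) \<Rightarrow> bool" where
  "hom_ncpoly d j p \<longleftrightarrow> (\<forall>w. w \<notin> words d j \<longrightarrow> p w = 0)"

definition matword :: "nat \<Rightarrow> (nat \<Rightarrow> nat \<Rightarrow> nat \<Rightarrow> 'k::semiring_1) \<Rightarrow> nat list \<Rightarrow> nat \<Rightarrow> nat \<Rightarrow> 'k" where
  "matword n X w = foldr (\<lambda>i M. mmult n (X i) M) w (idm n)"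

definition nceval :: "('k::semiring_1 \<Rightarrow> 'n \<Rightarrow> 'n) \<Rightarrow> nat \<Rightarrow> nat \<Rightarrow> nat \<Rightarrow> (nat list \<Rightarrow> 'n::comm_monoid_add) \<Rightarrow>
    (nat \<Rightarrow> nat \<Rightarrow> nat \<Rightarrow> 'k) \<Rightarrow> nat \<Rightarrow> nat \<Rightarrow> 'n" where
  "nceval sc d j n p X = (\<lambda>a b. \<Sum>w\<in>words d j. sc (matword n X w a b) (p w))"

definition nc_vanishes :: "('k::semiring_1 \<Rightarrow> 'n \<Rightarrow> 'n) \<Rightarrow> nat \<Rightarrow> nat \<Rightarrow> nat \<Rightarrow> (nat list \<Rightarrow> 'n::comm_monoid_add) \<Rightarrow> bool" where
  "nc_vanishes sc d j n p \<longleftrightarrow> (\<forall>X. \<forall>a<n. \<forall>b<n. nceval sc d j n p X a b = 0)"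

end

theory Submission
  imports Defs "HOL-Computational_Algebra.Polynomial"
begin

text \<open>
  A polynomial nc function is the sum of the homogeneous parts of its entry polynomials. Rescaling
  X to t X commutes with direct sums and similarities, so comparing coefficients of t shows that
  each homogeneous component is again an nc function, now homogeneous of some degree j.

  A homogeneous nc function h of degree j is an nc polynomial. On tuples X whose words of length
  j + 1 all vanish this holds because X is a quotient of the universal such tuple, the shift
  model (left multiplication by the letters on words of length at most j), and nc functions
  respect intertwiners; the coefficient of a word w is the entry of h at the shift model in
  position (w, empty word). A general X is placed in the top right corner of B \<otimes> X with B an
  upper bidiagonal (j+1) x (j+1) matrix with distinct diagonal entries s c_0, ..., s c_j: the
  eigenvectors of B intertwine the multiples s c_k X with B \<otimes> X, which forces that corner of
  h(B \<otimes> X) to equal h(X) for s \<noteq> 0. The corner is polynomial in s, so the same holds for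
  s = 0, where B \<otimes> X is nilpotent and the corner of a word of length j in it is the same word
  in X.

  Uniqueness: evaluated at the shift tuple along a word w, an nc polynomial of degree j returns
  its coefficient of w.
\<close>

section \<open>Matrix words, block matrices and Kronecker products\<close>

lemma sum_lessThan_add: "(\<Sum>c<n+(m::nat). g c) = (\<Sum>c<n. g c) + (\<Sum>c<m. g (n+c))"
  by (induction m) (simp_all add: add.assoc)

lemma sum_lessThan_mult_blocks: "(\<Sum>c<k*(n::nat). g c) = (\<Sum>p<k. \<Sum>a<n. g (p*n+a))"
proof (induction k)
  case (Suc k)
  have "Suc k * n = k*n + n" by simp
  then show ?case by (simp only: sum_lessThan_add Suc.IH sum.lessThan_Suc)
qed simp

lemma matword_Cons: "matword n X (i # w) = mmult n (X i) (matword n X w)"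
  by (simp add: matword_def)

lemma matword_Nil: "matword n X [] = idm n"
  by (simp add: matword_def)

definition scale_tuple :: "'k::times \<Rightarrow> (nat \<Rightarrow> nat \<Rightarrow> nat \<Rightarrow> 'k) \<Rightarrow> nat \<Rightarrow> nat \<Rightarrow> nat \<Rightarrow> 'k" where
  "scale_tuple t X = (\<lambda>i a b. t * X i a b)"

lemma matword_scale: "matword n (scale_tuple t X) u a b = t ^ length u * (matword n X u a b :: 'k::comm_semiring_1)"
proof (induction u arbitrary: a b)
  case Nil
  then show ?case by (simp add: matword_Nil)
next
  case (Cons i u)
  show ?case
    unfolding matword_Cons mmult_def Cons.IH by (simp add: scale_tuple_def sum_distrib_left algebra_simps)
qed

lemma blockdiag_upper_left: "e < n \<Longrightarrow> b < n \<Longrightarrow> blockdiag n A B e b = A e b"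
  and blockdiag_upper_right: "e < n \<Longrightarrow> blockdiag n A B e (n+c) = 0"
  and blockdiag_lower_right: "blockdiag n A B (n+a) (n+c) = B a c"
  and blockdiag_lower_left: "b < n \<Longrightarrow> blockdiag n A B (n+a) b = 0"
  by (auto simp: blockdiag_def)

definition shear :: "nat \<Rightarrow> nat \<Rightarrow> (nat \<Rightarrow> nat \<Rightarrow> 'k::comm_ring_1) \<Rightarrow> 'k \<Rightarrow> nat \<Rightarrow> nat \<Rightarrow> 'k" where
  "shear n m S \<sigma> a b = (if a = b then 1 else if n \<le> a \<and> b < n then \<sigma> * S (a-n) b else 0)"

lemma mmult_shear_left:
  assumes "a < n+m"
  shows "mmult (n+m) (shear n m S \<sigma>) M a c =
      (if a < n then M a c else M a c + \<sigma> * (\<Sum>e<n. S (a-n) e * M e c))"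
proof (cases "a < n")
  case True
  hence "mmult (n+m) (shear n m S \<sigma>) M a c = (\<Sum>e<n+m. if a = e then M e c else 0)"
    unfolding mmult_def shear_def by (intro sum.cong) auto
  also have "\<dots> = M a c" using assms by (simp add: sum.delta)
  finally show ?thesis using True by simp
next
  case False
  have "mmult (n+m) (shear n m S \<sigma>) M a c =
      (\<Sum>e<n. \<sigma> * S (a-n) e * M e c) + (\<Sum>e<m. if a = n + e then M (n+e) c else 0)"
    unfolding mmult_def sum_lessThan_add shear_def using False by (intro arg_cong2[where f="(+)"] sum.cong) auto
  also have "(\<Sum>e<m. if a = n + e then M (n+e) c else 0) = (\<Sum>e<m. if e = a - n then M a c else 0)"
    using False by (intro sum.cong) auto
  also have "\<dots> = M a c" using assms False by (simp add: sum.delta)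
  finally show ?thesis using False by (simp add: sum_distrib_left mult.assoc)
qed

lemma mmult_shear_right:
  assumes "b < n+m"
  shows "mmult (n+m) M (shear n m S \<sigma>) a b =
      (if b < n then M a b + \<sigma> * (\<Sum>c<m. M a (n+c) * S c b) else M a b)"
proof (cases "b < n")
  case True
  have "mmult (n+m) M (shear n m S \<sigma>) a b =
      (\<Sum>e<n. if e = b then M a b else 0) + (\<Sum>c<m. \<sigma> * (M a (n+c) * S c b))"
    unfolding mmult_def sum_lessThan_add shear_def using True by (intro arg_cong2[where f="(+)"] sum.cong) auto
  also have "(\<Sum>e<n. if e = b then M a b else 0) = M a b" using True by (simp add: sum.delta)
  finally show ?thesis using True by (simp add: sum_distrib_left)
next
  case False
  have "mmult (n+m) M (shear n m S \<sigma>) a b = (\<Sum>e<n+m. if e = b then M a b else 0)"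
    unfolding mmult_def shear_def using False by (intro sum.cong) auto
  also have "\<dots> = M a b" using assms by (simp add: sum.delta)
  finally show ?thesis using False by simp
qed

lemma minv_shear: "minv (n+m) (shear n m S 1) (shear n m S (-1))"
proof -
  have 1: "mmult (n+m) (shear n m S \<sigma>) (shear n m S (-\<sigma>)) a b = idm (n+m) a b"
    if "a < n+m" "b < n+m" for a b \<sigma>
  proof -
    have s: "(\<Sum>e<n. S (a-n) e * shear n m S (-\<sigma>) e b) = (\<Sum>e<n. if e = b then S (a-n) b else 0)"
      by (intro sum.cong) (auto simp: shear_def)
    show ?thesis using that unfolding mmult_shear_left[OF that(1)] s
      by (auto simp: sum.delta idm_def shear_def)
  qed
  show ?thesis unfolding minv_def using 1[of _ _ 1] 1[of _ _ "-1"] by simp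
qed

lemma shear_conj_blockdiag:
  fixes S X Y :: "nat \<Rightarrow> nat \<Rightarrow> 'k::comm_ring_1"
  assumes YS: "\<And>a b. a < m \<Longrightarrow> b < n \<Longrightarrow> (\<Sum>c<m. Y a c * S c b) =
      (\<Sum>c<n. S a c * X c b)"
    and a: "a < n+m" and b: "b < n+m"
  shows "mmult (n+m) (mmult (n+m) (shear n m S 1) (blockdiag n X Y)) (shear n m S (-1)) a b =
    blockdiag n X Y a b"
proof -
  define Z where "Z = blockdiag n X Y"
  define P where "P = mmult (n+m) (shear n m S 1) Z"
  have P: "P a c = (if a < n then Z a c else Z a c + (\<Sum>e<n. S (a-n) e * Z e c))" for c
    unfolding P_def using mmult_shear_left[OF a, of S 1 Z c] by simp
  have R: "mmult (n+m) P (shear n m S (-1)) a b =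
      (if b < n then P a b - (\<Sum>c<m. P a (n+c) * S c b) else P a b)"
    using mmult_shear_right[OF b, of P S "-1" a] by (simp add: sum_negf)
  have "mmult (n+m) P (shear n m S (-1)) a b = Z a b"
  proof (cases "a < n")
    case True
    have "(\<Sum>c<m. P a (n+c) * S c b) = 0"
      using True by (simp add: P Z_def blockdiag_upper_right)
    thus ?thesis using R True P by simp
  next
    case False
    then obtain a2 where a2: "a = n + a2" by (metis le_Suc_ex not_less)
    have a2m: "a2 < m" using a a2 by simp
    have Pn: "P a (n+c) = Y a2 c" for c
      using P[of "n+c"] a2 by (simp add: Z_def blockdiag_upper_right blockdiag_lower_right)
    show ?thesis
    proof (cases "b < n")
      case True
      have "(\<Sum>e<n. S (a-n) e * Z e b) = (\<Sum>e<n. S a2 e * X e b)"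
        using True a2 by (intro sum.cong) (simp_all add: Z_def blockdiag_upper_left)
      hence "P a b = (\<Sum>e<n. S a2 e * X e b)"
        using P[of b] True a2 False by (simp add: Z_def blockdiag_lower_left)
      moreover have "(\<Sum>c<m. P a (n+c) * S c b) = (\<Sum>c<m. Y a2 c * S c b)"
        by (simp add: Pn)
      ultimately show ?thesis using R True YS[OF a2m True] a2 by (simp add: Z_def blockdiag_lower_left)
    next
      case False
      then obtain b2 where "b = n + b2" by (metis le_Suc_ex not_less)
      thus ?thesis using R False Pn a2 by (simp add: Z_def blockdiag_lower_right)
    qed
  qed
  thus ?thesis by (simp add: P_def Z_def)
qed

definition bidiag :: "('k::field) \<Rightarrow> (nat \<Rightarrow> 'k) \<Rightarrow> nat \<Rightarrow> nat \<Rightarrow> 'k" where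
  "bidiag s cc p q = (if p = q then s * cc p else if q = Suc p then 1 else 0)"

definition bidiag_pow :: "nat \<Rightarrow> ('k::field) \<Rightarrow> (nat \<Rightarrow> 'k) \<Rightarrow> nat \<Rightarrow> nat \<Rightarrow> nat \<Rightarrow> 'k" where
  "bidiag_pow j s cc k = matword (Suc j) (\<lambda>_. bidiag s cc) (replicate k 0)"

lemma bidiag_pow_0: "bidiag_pow j s cc 0 = idm (Suc j)" by (simp add: bidiag_pow_def matword_Nil)

lemma bidiag_pow_Suc: "bidiag_pow j s cc (Suc k) = mmult (Suc j) (bidiag s cc) (bidiag_pow j s cc k)"
  by (simp add: bidiag_pow_def matword_Cons)

lemma bidiag_row:
  assumes "p < Suc j"
  shows "(\<Sum>r<Suc j. bidiag s cc p r * v r) = s * cc p * v p + (if Suc p < Suc j then v (Suc p) else 0)"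
proof -
  have "(\<Sum>r<Suc j. bidiag s cc p r * v r) =
      (\<Sum>r<Suc j. (if r = p then s * cc p * v p else 0) + (if r = Suc p then v (Suc p) else 0))"
    by (intro sum.cong) (auto simp: bidiag_def)
  also have "\<dots> = s * cc p * v p + (if Suc p < Suc j then v (Suc p) else 0)"
    using assms by (simp add: sum.distrib sum.delta)
  finally show ?thesis .
qed

lemma bidiag_pow_upper:
  assumes "p < Suc j" "q < Suc j"
  shows "(p + k < q \<longrightarrow> bidiag_pow j s cc k p q = 0) \<and> (q = p + k \<longrightarrow> bidiag_pow j s cc k p q = 1)"
  using assms
proof (induction k arbitrary: p)
  case 0
  then show ?case by (simp add: bidiag_pow_0 idm_def)
next
  case (Suc k)
  have eq: "bidiag_pow j s cc (Suc k) p q =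
      s * cc p * bidiag_pow j s cc k p q + (if Suc p < Suc j then bidiag_pow j s cc k (Suc p) q else 0)"
    unfolding bidiag_pow_Suc mmult_def by (rule bidiag_row[OF Suc.prems(1)])
  show ?case
  proof (intro conjI impI)
    assume "p + Suc k < q"
    thus "bidiag_pow j s cc (Suc k) p q = 0" using eq Suc.IH[of p] Suc.IH[of "Suc p"] Suc.prems by auto
  next
    assume q: "q = p + Suc k"
    hence "Suc p < Suc j" using Suc.prems by simp
    thus "bidiag_pow j s cc (Suc k) p q = 1" using eq Suc.IH[of p] Suc.IH[of "Suc p"] Suc.prems q by auto
  qed
qed

lemma bidiag_pow_shift:
  assumes "p < Suc j" "q < Suc j"
  shows "bidiag_pow j 0 cc k p q = (if q = p + k then 1 else 0)"
  using assms
proof (induction k arbitrary: p)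
  case 0
  then show ?case by (simp add: bidiag_pow_0 idm_def)
next
  case (Suc k)
  have eq: "bidiag_pow j 0 cc (Suc k) p q = (if Suc p < Suc j then bidiag_pow j 0 cc k (Suc p) q else 0)"
    unfolding bidiag_pow_Suc mmult_def using bidiag_row[OF Suc.prems(1), where s=0 and v="\<lambda>r. bidiag_pow j 0 cc k r q"] by simp
  show ?case using eq Suc.IH[of "Suc p"] Suc.prems by auto
qed

definition bidiag_eigvec :: "('k::field) \<Rightarrow> (nat \<Rightarrow> 'k) \<Rightarrow> nat \<Rightarrow> nat \<Rightarrow> 'k" where
  "bidiag_eigvec s cc k q = (if q \<le> k then (\<Prod>l\<in>{q..<k}. inverse (s * (cc k - cc l))) else 0)"

lemma bidiag_eigvec_eigen:
  assumes s: "s \<noteq> 0" and cc: "inj cc" and q: "q < Suc j" and k: "k < Suc j"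
  shows "(\<Sum>r<Suc j. bidiag s cc q r * bidiag_eigvec s cc k r) = s * cc k * bidiag_eigvec s cc k q"
proof -
  have e: "(\<Sum>r<Suc j. bidiag s cc q r * bidiag_eigvec s cc k r) =
      s * cc q * bidiag_eigvec s cc k q + (if Suc q < Suc j then bidiag_eigvec s cc k (Suc q) else 0)"
    by (rule bidiag_row[OF q])
  consider "k < q" | "k = q" | "q < k" by linarith
  thus ?thesis
  proof cases
    case 1 thus ?thesis using e by (simp add: bidiag_eigvec_def)
  next
    case 2 thus ?thesis using e by (simp add: bidiag_eigvec_def)
  next
    case 3
    have ne: "cc k - cc q \<noteq> 0" using cc 3 by (simp add: inj_eq)
    have split: "{q..<k} = insert q {Suc q..<k}" using 3 by auto
    have uq: "bidiag_eigvec s cc k q = inverse (s * (cc k - cc q)) * bidiag_eigvec s cc k (Suc q)"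
      using 3 by (simp add: bidiag_eigvec_def split)
    have "s * cc q * bidiag_eigvec s cc k q + bidiag_eigvec s cc k (Suc q) = s * cc k * bidiag_eigvec s cc k q"
      using s ne by (simp add: uq field_simps)
    thus ?thesis using e 3 k by simp
  qed
qed

lemma bidiag_pow_eigvec:
  assumes s: "s \<noteq> 0" and cc: "inj cc" and q: "q < Suc j" and k: "k < Suc j"
  shows "(\<Sum>r<Suc j. bidiag_pow j s cc e q r * bidiag_eigvec s cc k r) = (s * cc k) ^ e * bidiag_eigvec s cc k q"
  using q
proof (induction e arbitrary: q)
  case 0
  have "(\<Sum>r<Suc j. bidiag_pow j s cc 0 q r * bidiag_eigvec s cc k r) =
      (\<Sum>r<Suc j. if r = q then bidiag_eigvec s cc k q else 0)"
    by (intro sum.cong) (auto simp: bidiag_pow_0 idm_def)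
  then show ?case using 0 by (simp add: sum.delta)
next
  case (Suc e)
  have "(\<Sum>r<Suc j. bidiag_pow j s cc (Suc e) q r * bidiag_eigvec s cc k r) =
      (\<Sum>r<Suc j. \<Sum>r'<Suc j. bidiag s cc q r' * bidiag_pow j s cc e r' r * bidiag_eigvec s cc k r)"
    unfolding bidiag_pow_Suc mmult_def sum_distrib_right by (rule refl)
  also have "\<dots> =
      (\<Sum>r'<Suc j. bidiag s cc q r' * (\<Sum>r<Suc j. bidiag_pow j s cc e r' r * bidiag_eigvec s cc k r))"
    by (subst sum.swap) (simp only: sum_distrib_left mult.assoc)
  also have "\<dots> = (\<Sum>r'<Suc j. bidiag s cc q r' * ((s * cc k) ^ e * bidiag_eigvec s cc k r'))"
    using Suc.IH by simp
  also have "\<dots> = (s * cc k) ^ e * (\<Sum>r'<Suc j. bidiag s cc q r' * bidiag_eigvec s cc k r')"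
    by (simp add: sum_distrib_left algebra_simps)
  also have "\<dots> = (s * cc k) ^ Suc e * bidiag_eigvec s cc k q"
    using bidiag_eigvec_eigen[OF s cc Suc.prems k] by simp
  finally show ?case .
qed

definition kron :: "nat \<Rightarrow> (nat \<Rightarrow> nat \<Rightarrow> 'k::times) \<Rightarrow> (nat \<Rightarrow> nat \<Rightarrow> 'k) \<Rightarrow> nat \<Rightarrow> nat \<Rightarrow> 'k" where
  "kron n A B c c' = A (c div n) (c' div n) * B (c mod n) (c' mod n)"

lemma kron_block: "a < n \<Longrightarrow> b < n \<Longrightarrow> kron n A B (p*n+a) (q*n+b) = A p q * B a b"
  by (simp add: kron_def)

definition kron_col :: "nat \<Rightarrow> (nat \<Rightarrow> 'k::zero) \<Rightarrow> nat \<Rightarrow> nat \<Rightarrow> 'k" where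
  "kron_col n u c b = (if c mod n = b then u (c div n) else 0)"

lemma kron_mult_kron_col:
  fixes T A :: "nat \<Rightarrow> nat \<Rightarrow> 'k::comm_semiring_1"
  assumes eig: "\<And>p. p < N \<Longrightarrow> (\<Sum>r<N. T p r * u r) = \<mu> * u p" and a: "a < N * n" and b: "b < n"
  shows "(\<Sum>c<N*n. kron n T A a c * kron_col n u c b) = (\<Sum>c<n. kron_col n u a c * (\<mu> * A c b))"
proof -
  define p where "p = a div n"
  define a0 where "a0 = a mod n"
  have p: "p < N" using a unfolding p_def by (simp add: less_mult_imp_div_less)
  have a0: "a0 < n" using b unfolding a0_def by simp
  have a_eq: "a = p*n + a0" unfolding p_def a0_def by simp
  have "(\<Sum>c<N*n. kron n T A a c * kron_col n u c b) =
      (\<Sum>r<N. \<Sum>c<n. kron n T A (p*n+a0) (r*n+c) * kron_col n u (r*n+c) b)"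
    unfolding sum_lessThan_mult_blocks a_eq by (rule refl)
  also have "\<dots> = (\<Sum>r<N. \<Sum>c<n. if c = b then T p r * A a0 b * u r else 0)"
    by (intro sum.cong refl) (auto simp: kron_block a0 kron_col_def)
  also have "\<dots> = (\<Sum>r<N. T p r * u r) * A a0 b"
    using b by (simp add: sum.delta sum_distrib_left sum_distrib_right ac_simps)
  also have "\<dots> = \<mu> * u p * A a0 b"
    using eig[OF p] by simp
  also have "\<dots> = (\<Sum>c<n. if c = a0 then u p * (\<mu> * A a0 b) else 0)"
    using a0 by (simp add: sum.delta ac_simps)
  also have "\<dots> = (\<Sum>c<n. kron_col n u a c * (\<mu> * A c b))"
    by (intro sum.cong refl) (auto simp: kron_col_def p_def a0_def)
  finally show ?thesis .
qed

lemma matword_kron: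
  assumes "p < Suc j" "q < Suc j" "a < n" "b < n"
  shows "matword (Suc j * n) (\<lambda>i. kron n T (X i)) u (p*n+a) (q*n+b) =
         matword (Suc j) (\<lambda>_. T) (replicate (length u) 0) p q * (matword n X u a b :: 'k::comm_semiring_1)"
  using assms(1,3)
proof (induction u arbitrary: p a)
  case Nil
  have "(p*n+a = q*n+b) = (p = q \<and> a = b)"
  proof
    assume "p*n+a = q*n+b"
    hence "(p*n+a) div n = (q*n+b) div n" "(p*n+a) mod n = (q*n+b) mod n" by simp_all
    thus "p = q \<and> a = b" using Nil assms by simp
  qed simp
  moreover have "p*n+a < Suc j * n"
  proof -
    have "p*n+a < p*n + n" using Nil by simp
    also have "\<dots> = Suc p * n" by simp
    also have "\<dots> \<le> Suc j * n" using Nil by (intro mult_right_mono) simp_all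
    finally show ?thesis .
  qed
  ultimately show ?case using Nil assms by (auto simp: matword_Nil idm_def)
next
  case (Cons i u)
  have "matword (Suc j * n) (\<lambda>i. kron n T (X i)) (i # u) (p*n+a) (q*n+b) =
      (\<Sum>r<Suc j. \<Sum>c<n. kron n T (X i) (p*n+a) (r*n+c) * matword (Suc j * n) (\<lambda>i. kron n T (X i)) u (r*n+c) (q*n+b))"
    unfolding matword_Cons mmult_def sum_lessThan_mult_blocks by (rule refl)
  also have "\<dots> =
      (\<Sum>r<Suc j. \<Sum>c<n. (T p r * matword (Suc j) (\<lambda>_. T) (replicate (length u) 0) r q) * (X i a c * matword n X u c b))"
  proof (intro sum.cong refl)
    fix r c assume "r \<in> {..<Suc j}" "c \<in> {..<n}"
    hence rc: "r < Suc j" "c < n" by auto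
    show "kron n T (X i) (p*n+a) (r*n+c) * matword (Suc j * n) (\<lambda>i. kron n T (X i)) u (r*n+c) (q*n+b) =
        (T p r * matword (Suc j) (\<lambda>_. T) (replicate (length u) 0) r q) * (X i a c * matword n X u c b)"
      by (simp only: kron_block[OF Cons.prems(2) rc(2)] Cons.IH[OF rc]) (simp add: ac_simps)
  qed
  also have "\<dots> =
      (\<Sum>r<Suc j. T p r * matword (Suc j) (\<lambda>_. T) (replicate (length u) 0) r q) * (\<Sum>c<n. X i a c * matword n X u c b)"
    by (simp only: sum_product)
  also have "\<dots> = matword (Suc j) (\<lambda>_. T) (replicate (length (i # u)) 0) p q * matword n X (i # u) a b"
    by (simp add: matword_Cons mmult_def)
  finally show ?case .
qed

section \<open>Words of bounded length and nilpotent tuples\<close>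

definition words_upto :: "nat \<Rightarrow> nat \<Rightarrow> nat list set" where
  "words_upto d j = {w. set w \<subseteq> {..<d} \<and> length w \<le> j}"

definition nwords_upto :: "nat \<Rightarrow> nat \<Rightarrow> nat" where "nwords_upto d j = card (words_upto d j)"

definition word_index :: "nat \<Rightarrow> nat \<Rightarrow> nat list \<Rightarrow> nat" where
  "word_index d j = (SOME e. bij_betw e (words_upto d j) {..<nwords_upto d j})"

definition index_word :: "nat \<Rightarrow> nat \<Rightarrow> nat \<Rightarrow> nat list" where
  "index_word d j = inv_into (words_upto d j) (word_index d j)"

text \<open>The matrix of left multiplication by the letter i on the span of the words of length at
  most j, in the basis given by \<open>word_index\<close>.\<close>
definition shift_model :: "nat \<Rightarrow> nat \<Rightarrow> nat \<Rightarrow> nat \<Rightarrow> nat \<Rightarrow> 'k::{zero,one}" where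
  "shift_model d j i p q =
      (if i < d \<and> p < nwords_upto d j \<and> q < nwords_upto d j \<and> index_word d j p = i # index_word d j q then 1 else 0)"

lemma finite_words_upto: "finite (words_upto d j)"
  unfolding words_upto_def using finite_lists_length_le[of "{..<d}" j] by simp

lemma bij_word_index: "bij_betw (word_index d j) (words_upto d j) {..<nwords_upto d j}"
proof -
  have "\<exists>e. bij_betw e (words_upto d j) {..<nwords_upto d j}"
    using ex_bij_betw_finite_nat[OF finite_words_upto, of d j] unfolding nwords_upto_def by (simp add: atLeast0LessThan)
  thus ?thesis unfolding word_index_def by (rule someI_ex)
qed

lemma index_word_word_index: "w \<in> words_upto d j \<Longrightarrow> index_word d j (word_index d j w) = w"
  unfolding index_word_def using bij_word_index by (metis bij_betw_inv_into_left)

lemma word_index_index_word: "p < nwords_upto d j \<Longrightarrow> word_index d j (index_word d j p) = p"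
  unfolding index_word_def using bij_word_index by (metis bij_betw_inv_into_right lessThan_iff)

lemma index_word_in_words_upto: "p < nwords_upto d j \<Longrightarrow> index_word d j p \<in> words_upto d j"
  unfolding index_word_def using bij_word_index by (metis bij_betw_def inv_into_into lessThan_iff)

lemma word_index_less: "w \<in> words_upto d j \<Longrightarrow> word_index d j w < nwords_upto d j"
  using bij_word_index by (metis bij_betwE lessThan_iff)

lemma Nil_in_words_upto: "[] \<in> words_upto d j" by (simp add: words_upto_def)

definition nilpotent_tuple :: "nat \<Rightarrow> nat \<Rightarrow> nat \<Rightarrow> (nat \<Rightarrow> nat \<Rightarrow> nat \<Rightarrow> 'k::semiring_1) \<Rightarrow> bool" where
  "nilpotent_tuple d j n X \<longleftrightarrow> (\<forall>u. length u = Suc j \<longrightarrow> set u \<subseteq> {..<d} \<longrightarrow> (\<forall>a<n. \<forall>b<n. matword n X u a b = 0))"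

lemma nilpotent_tuple_scale: "nilpotent_tuple d j n X \<Longrightarrow> nilpotent_tuple d j n (scale_tuple t (X :: nat \<Rightarrow> nat \<Rightarrow> nat \<Rightarrow> 'k::comm_semiring_1))"
  unfolding nilpotent_tuple_def by (simp add: matword_scale)

lemma words_eq_words_upto_length: "words d j = {u \<in> words_upto d j. length u = j}"
  by (auto simp: words_def words_upto_def)

lemma finite_words: "finite (words d j)"
  using finite_words_upto[of d j] by (simp add: words_eq_words_upto_length)

lemma nilpotent_tuple_kron_shift:
  fixes X :: "nat \<Rightarrow> nat \<Rightarrow> nat \<Rightarrow> 'k::field"
  shows "nilpotent_tuple d j (Suc j * n) (\<lambda>i. kron n (bidiag 0 cc) (X i))"
  unfolding nilpotent_tuple_def
proof (intro allI impI)
  fix u :: "nat list" and c c' assume u: "length u = Suc j" and c: "c < Suc j * n" and c': "c' < Suc j * n"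
  have p: "c div n < Suc j" "c' div n < Suc j" using c c' by (simp_all add: less_mult_imp_div_less)
  have "n > 0" using c by (cases n) simp_all
  hence r: "c mod n < n" "c' mod n < n" by simp_all
  have "matword (Suc j * n) (\<lambda>i. kron n (bidiag 0 cc) (X i)) u c c' =
      matword (Suc j * n) (\<lambda>i. kron n (bidiag 0 cc) (X i)) u ((c div n)*n + c mod n) ((c' div n)*n + c' mod n)"
    by simp
  also have "\<dots> = bidiag_pow j 0 cc (length u) (c div n) (c' div n) * matword n X u (c mod n) (c' mod n)"
    unfolding bidiag_pow_def by (rule matword_kron[OF p r])
  also have "\<dots> = 0" using bidiag_pow_shift[OF p, of cc "length u"] u p by simp
  finally show "matword (Suc j * n) (\<lambda>i. kron n (bidiag 0 cc) (X i)) u c c' = 0" .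
qed

lemma matword_kron_shift_corner:
  fixes X :: "nat \<Rightarrow> nat \<Rightarrow> nat \<Rightarrow> 'k::field"
  assumes "length u = j" "a < n" "b < n"
  shows "matword (Suc j * n) (\<lambda>i. kron n (bidiag 0 cc) (X i)) u a (j*n+b) = matword n X u a b"
proof -
  have "matword (Suc j * n) (\<lambda>i. kron n (bidiag 0 cc) (X i)) u (0*n+a) (j*n+b) =
      bidiag_pow j 0 cc (length u) 0 j * matword n X u a b"
    unfolding bidiag_pow_def by (rule matword_kron) (use assms in simp_all)
  thus ?thesis using bidiag_pow_shift[of 0 j j cc "length u"] assms by simp
qed

lemma matword_intertwines_shift_model:
  fixes X :: "nat \<Rightarrow> nat \<Rightarrow> nat \<Rightarrow> 'k::comm_semiring_1"
  assumes nil: "nilpotent_tuple d j n X" and i: "i < d" and a: "a < n" and b: "b < n"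
    and q: "q < nwords_upto d j"
  shows "(\<Sum>c<n. X i a c * matword n X (index_word d j q) c b) =
    (\<Sum>p<nwords_upto d j. matword n X (index_word d j p) a b * shift_model d j i p q)"
proof -
  define w where "w = i # index_word d j q"
  have L: "(\<Sum>c<n. X i a c * matword n X (index_word d j q) c b) = matword n X w a b"
    by (simp add: w_def matword_Cons mmult_def)
  have q_word: "index_word d j q \<in> words_upto d j" using index_word_in_words_upto q by simp
  show ?thesis
  proof (cases "length (index_word d j q) < j")
    case True
    hence w_word: "w \<in> words_upto d j" using q_word i by (auto simp: w_def words_upto_def)
    have "matword n X (index_word d j p) a b * shift_model d j i p q =
        (if p = word_index d j w then matword n X (index_word d j p) a b else 0)"
      if "p \<in> {..<nwords_upto d j}" for p
      using that q i index_word_word_index[OF w_word] word_index_index_word[of p d j]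
      unfolding shift_model_def w_def by auto
    hence "(\<Sum>p<nwords_upto d j. matword n X (index_word d j p) a b * shift_model d j i p q) =
        (\<Sum>p<nwords_upto d j. if p = word_index d j w then matword n X (index_word d j p) a b else 0)"
      by (rule sum.cong[OF refl])
    also have "\<dots> = matword n X (index_word d j (word_index d j w)) a b"
      using word_index_less[OF w_word] by (simp add: sum.delta)
    finally show ?thesis using L by (simp add: index_word_word_index[OF w_word])
  next
    case False
    hence len: "length w = Suc j" using q_word by (simp add: w_def words_upto_def)
    have "set w \<subseteq> {..<d}" using q_word i by (simp add: w_def words_upto_def)
    hence "matword n X w a b = 0" using nil len a b unfolding nilpotent_tuple_def by blast
    moreover have "shift_model d j i p q = 0" if "p < nwords_upto d j" for p
    proof -
      have "index_word d j p \<in> words_upto d j" using index_word_in_words_upto that by simp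
      hence "index_word d j p \<noteq> w" using len by (auto simp: words_upto_def)
      thus ?thesis by (simp add: shift_model_def w_def)
    qed
    ultimately show ?thesis using L by (metis (no_types, lifting) lessThan_iff mult_zero_right sum.neutral)
  qed
qed

definition shift_tuple :: "nat \<Rightarrow> nat list \<Rightarrow> nat \<Rightarrow> nat \<Rightarrow> nat \<Rightarrow> 'k::{zero,one}" where
  "shift_tuple j w i a b = (if b = Suc a \<and> a < j \<and> w ! a = i then 1 else 0)"

lemma matword_shift_tuple:
  assumes w: "length w = j" and ab: "a < Suc j" "b < Suc j"
  shows "matword (Suc j) (shift_tuple j w) v a b =
      (if b = a + length v \<and> v = take (length v) (drop a w) then 1 else (0::'k::comm_semiring_1))"
  using ab(1)
proof (induction v arbitrary: a)
  case Nil
  then show ?case using ab by (simp add: matword_Nil idm_def)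
next
  case (Cons i v)
  have "(matword (Suc j) (shift_tuple j w) (i # v) a b :: 'k) =
      (\<Sum>c<Suc j. if c = Suc a then (if a < j \<and> w ! a = i then matword (Suc j) (shift_tuple j w) v (Suc a) b else 0) else 0)"
    unfolding matword_Cons mmult_def by (intro sum.cong refl) (auto simp: shift_tuple_def)
  also have "\<dots> = (if a < j \<and> w ! a = i then matword (Suc j) (shift_tuple j w) v (Suc a) b else 0)"
    by (simp add: sum.delta del: sum.lessThan_Suc)
  also have "\<dots> = (if b = a + length (i # v) \<and> i # v = take (length (i # v)) (drop a w) then 1 else 0)"
  proof (cases "a < j")
    case True
    have dr: "drop a w = w ! a # drop (Suc a) w" using True w by (simp add: Cons_nth_drop_Suc)
    show ?thesis using True Cons.IH[of "Suc a"] by (auto simp: dr)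
  next
    case False
    hence "drop a w = []" using w by simp
    thus ?thesis using False by simp
  qed
  finally show ?case .
qed

lemma matword_shift_tuple_corner:
  assumes "length w = j" "length v = j"
  shows "matword (Suc j) (shift_tuple j w) v 0 j = (if v = w then 1 else (0::'k::comm_semiring_1))"
  using matword_shift_tuple[OF assms(1), of 0 j v] assms by auto

section \<open>Matrices with entries in a vector space\<close>

context vector_space begin

lemma lact_shear:
  assumes "a < n+m"
  shows "lact scale (n+m) (shear n m S \<sigma>) M a c =
      (if a < n then M a c else M a c + (\<Sum>e<n. scale (\<sigma> * S (a-n) e) (M e c)))"
proof (cases "a < n")
  case True
  hence "lact scale (n+m) (shear n m S \<sigma>) M a c = (\<Sum>e<n+m. if a = e then M e c else 0)"
    unfolding lact_def shear_def by (intro sum.cong) auto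
  also have "\<dots> = M a c" using assms by (simp add: sum.delta)
  finally show ?thesis using True by simp
next
  case False
  have "lact scale (n+m) (shear n m S \<sigma>) M a c =
      (\<Sum>e<n. scale (\<sigma> * S (a-n) e) (M e c)) + (\<Sum>e<m. if a = n + e then M (n+e) c else 0)"
    unfolding lact_def sum_lessThan_add shear_def using False by (intro arg_cong2[where f="(+)"] sum.cong) auto
  also have "(\<Sum>e<m. if a = n + e then M (n+e) c else 0) = (\<Sum>e<m. if e = a - n then M a c else 0)"
    using False by (intro sum.cong) auto
  also have "\<dots> = M a c" using assms False by (simp add: sum.delta less_diff_conv2)
  finally show ?thesis using False by (simp add: add.commute)
qed

lemma ract_shear:
  assumes "b < n+m"
  shows "ract scale (n+m) M (shear n m S \<sigma>) a b =
      (if b < n then M a b + (\<Sum>c<m. scale (\<sigma> * S c b) (M a (n+c))) else M a b)"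
proof (cases "b < n")
  case True
  have "ract scale (n+m) M (shear n m S \<sigma>) a b =
      (\<Sum>e<n. if e = b then M a b else 0) + (\<Sum>c<m. scale (\<sigma> * S c b) (M a (n+c)))"
    unfolding ract_def sum_lessThan_add shear_def using True by (intro arg_cong2[where f="(+)"] sum.cong) auto
  also have "(\<Sum>e<n. if e = b then M a b else 0) = M a b" using True by (simp add: sum.delta)
  finally show ?thesis using True by simp
next
  case False
  have "ract scale (n+m) M (shear n m S \<sigma>) a b = (\<Sum>e<n+m. if e = b then M a b else 0)"
    unfolding ract_def shear_def using False by (intro sum.cong) auto
  also have "\<dots> = M a b" using assms by (simp add: sum.delta)
  finally show ?thesis using False by simp
qed

lemma shear_conj_lower_left:
  assumes H: "\<And>c e. c < n+m \<Longrightarrow> e < n+m \<Longrightarrow> H c e = blockdiag n A B c e"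
    and ab: "a < m" "b < n"
  shows "ract scale (n+m) (lact scale (n+m) (shear n m S 1) H) (shear n m S (-1)) (n+a) b =
    (\<Sum>e<n. scale (S a e) (A e b)) - (\<Sum>c<m. scale (S c b) (B a c))"
proof -
  have na: "n + a < n + m" and bn: "b < n + m" using ab by simp_all
  define M where "M = lact scale (n+m) (shear n m S 1) H"
  have M: "M (n+a) c = H (n+a) c + (\<Sum>e<n. scale (S a e) (H e c))" if "c < n+m" for c
    unfolding M_def using lact_shear[OF na] by simp
  have M1: "M (n+a) b = (\<Sum>e<n. scale (S a e) (A e b))"
    using M[OF bn] H ab by (simp add: blockdiag_upper_left blockdiag_lower_left)
  have M2: "M (n+a) (n+c) = B a c" if "c < m" for c
    using M[of "n+c"] H that ab by (simp add: blockdiag_upper_right blockdiag_lower_right)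
  have "ract scale (n+m) M (shear n m S (-1)) (n+a) b =
      M (n+a) b + (\<Sum>c<m. scale (- S c b) (M (n+a) (n+c)))"
    using ract_shear[OF bn] ab by simp
  also have "(\<Sum>c<m. scale (- S c b) (M (n+a) (n+c))) = - (\<Sum>c<m. scale (S c b) (B a c))"
    by (simp add: M2 sum_negf)
  finally show ?thesis using M1 unfolding M_def by simp
qed

lemma sum_scale_kron_col_right:
  assumes "b < n"
  shows "(\<Sum>c<N*n. scale (kron_col n u c b) (M c)) = (\<Sum>r<N. scale (u r) (M (r*n+b)))"
proof -
  have "(\<Sum>c<N*n. scale (kron_col n u c b) (M c)) =
      (\<Sum>r<N. \<Sum>c<n. if c = b then scale (u r) (M (r*n+b)) else 0)"
    unfolding sum_lessThan_mult_blocks by (intro sum.cong refl) (auto simp: kron_col_def)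
  thus ?thesis using assms by (simp add: sum.delta)
qed

lemma sum_scale_kron_col_left:
  assumes "a < n"
  shows "(\<Sum>c<n. scale (kron_col n u a c) (M c)) = scale (u 0) (M a)"
proof -
  have "(\<Sum>c<n. scale (kron_col n u a c) (M c)) = (\<Sum>c<n. if c = a then scale (u 0) (M a) else 0)"
    by (intro sum.cong refl) (use assms in \<open>auto simp: kron_col_def\<close>)
  thus ?thesis using assms by (simp add: sum.delta)
qed

lemma ract_lact_power_sum:
  assumes "\<And>c e. c < n \<Longrightarrow> e < n \<Longrightarrow> M c e = (\<Sum>j\<le>K. scale (t ^ j) (G j c e))"
  shows "ract scale n (lact scale n S M) T a b =
      (\<Sum>j\<le>K. scale (t ^ j) (ract scale n (lact scale n S (G j)) T a b))"
proof -
  have "ract scale n (lact scale n S M) T a b =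
      (\<Sum>c<n. scale (T c b) (\<Sum>e<n. scale (S a e) (\<Sum>j\<le>K. scale (t ^ j) (G j e c))))"
    unfolding ract_def lact_def using assms by (intro sum.cong refl arg_cong2[where f=scale]) auto
  also have "\<dots> = (\<Sum>c<n. \<Sum>e<n. \<Sum>j\<le>K. scale (t ^ j) (scale (T c b) (scale (S a e) (G j e c))))"
    by (simp add: scale_sum_right ac_simps)
  also have "\<dots> = (\<Sum>c<n. \<Sum>j\<le>K. \<Sum>e<n. scale (t ^ j) (scale (T c b) (scale (S a e) (G j e c))))"
    by (rule sum.cong[OF refl], rule sum.swap)
  also have "\<dots> = (\<Sum>j\<le>K. \<Sum>c<n. \<Sum>e<n. scale (t ^ j) (scale (T c b) (scale (S a e) (G j e c))))"
    by (rule sum.swap)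
  also have "\<dots> = (\<Sum>j\<le>K. scale (t ^ j) (ract scale n (lact scale n S (G j)) T a b))"
    unfolding ract_def lact_def by (simp add: scale_sum_right)
  finally show ?thesis .
qed

lemma nceval_scale: "nceval scale d j n p (scale_tuple t X) a b = scale (t ^ j) (nceval scale d j n p X a b)"
  unfolding nceval_def scale_sum_right
  by (intro sum.cong refl) (simp add: matword_scale words_def)

lemma nceval_shift_tuple:
  assumes "w \<in> words d j"
  shows "nceval scale d j (Suc j) r (shift_tuple j w) 0 j = r w"
proof -
  have "nceval scale d j (Suc j) r (shift_tuple j w) 0 j = (\<Sum>v\<in>words d j. if v = w then r w else 0)"
    unfolding nceval_def using assms
    by (intro sum.cong refl) (simp add: words_def matword_shift_tuple_corner)
  also have "\<dots> = r w" using assms finite_words by (simp add: sum.delta)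
  finally show ?thesis .
qed

lemma hom_ncpoly_eqI:
  assumes "hom_ncpoly d j p" "hom_ncpoly d j q"
    and "\<And>n X a b. a < n \<Longrightarrow> b < n \<Longrightarrow> nceval scale d j n p X a b =
        nceval scale d j n q X a b"
  shows "p = q"
proof
  fix w
  show "p w = q w"
  proof (cases "w \<in> words d j")
    case True
    thus ?thesis using assms(3)[of 0 "Suc j" j "shift_tuple j w"] nceval_shift_tuple by simp
  qed (use assms(1,2) in \<open>simp add: hom_ncpoly_def\<close>)
qed

lemma unitriangular_system_zero:
  assumes eqs: "\<And>k. k < Suc j \<Longrightarrow> (\<Sum>r<Suc j. scale (U k r) (G r)) = 0"
    and diag: "\<And>k. U k k = 1" and up: "\<And>k r. k < r \<Longrightarrow> U k r = 0"
    and k: "k < Suc j"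
  shows "G k = 0"
  using k
proof (induction k rule: less_induct)
  case (less k)
  have "(\<Sum>r<Suc j. scale (U k r) (G r)) = (\<Sum>r<Suc j. if r = k then G k else 0)"
  proof (intro sum.cong refl)
    fix r assume "r \<in> {..<Suc j}"
    consider "r < k" | "r = k" | "k < r" by linarith
    thus "scale (U k r) (G r) = (if r = k then G k else 0)"
      by cases (use less.IH[of r] less.prems diag up in auto)
  qed
  thus ?case using eqs[OF less.prems] less.prems by (simp add: sum.delta del: sum.lessThan_Suc)
qed

end

section \<open>Homogeneous parts of commutative polynomials\<close>

definition monomial_value :: "('v \<Rightarrow>\<^sub>0 nat) \<Rightarrow> ('v \<Rightarrow> 'k::comm_semiring_1) \<Rightarrow> 'k" where
  "monomial_value \<alpha> x = (\<Prod>v\<in>Poly_Mapping.keys \<alpha>. x v ^ Poly_Mapping.lookup \<alpha> v)"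

definition hom_part :: "('k::comm_semiring_1 \<Rightarrow> 'n \<Rightarrow> 'n) \<Rightarrow> (('v \<Rightarrow>\<^sub>0 nat) \<Rightarrow>\<^sub>0 'n::comm_monoid_add) \<Rightarrow> nat \<Rightarrow> ('v \<Rightarrow> 'k) \<Rightarrow> 'n" where
  "hom_part sc P j x =
      (\<Sum>\<alpha>\<in>{\<alpha> \<in> Poly_Mapping.keys P. mdeg \<alpha> = j}. sc (monomial_value \<alpha> x) (Poly_Mapping.lookup P \<alpha>))"

lemma peval_monomial_value: "peval sc P x =
    (\<Sum>\<alpha>\<in>Poly_Mapping.keys P. sc (monomial_value \<alpha> x) (Poly_Mapping.lookup P \<alpha>))"
  by (simp add: peval_def monomial_value_def)

lemma monomial_value_scale: "monomial_value \<alpha> (\<lambda>v. t * x v) =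
    t ^ mdeg \<alpha> * monomial_value \<alpha> x"
  by (simp add: monomial_value_def mdeg_def power_mult_distrib prod.distrib power_sum)

lemma monomial_value_affine: "monomial_value \<alpha> (\<lambda>v. x0 v + s * x1 v) =
    poly (\<Prod>v\<in>Poly_Mapping.keys \<alpha>. [:x0 v, x1 v:] ^ Poly_Mapping.lookup \<alpha> v) s"
  by (simp add: monomial_value_def poly_prod)

lemma monomial_value_local: "(\<And>v. v \<in> Poly_Mapping.keys \<alpha> \<Longrightarrow> x v = y v) \<Longrightarrow> monomial_value \<alpha> x = monomial_value \<alpha> y"
  unfolding monomial_value_def by (intro prod.cong) auto

lemma monomial_value_over:
  assumes "Poly_Mapping.keys \<alpha> \<subseteq> V" "finite V"
  shows "monomial_value \<alpha> x = (\<Prod>v\<in>V. x v ^ Poly_Mapping.lookup \<alpha> v)"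
  unfolding monomial_value_def using assms by (intro prod.mono_neutral_left) (auto simp: in_keys_iff)

lemma uncurry_scale_tuple: "(\<lambda>(i, p, q). scale_tuple t X i p q) =
    (\<lambda>v. t * (\<lambda>(i, p, q). X i p q) v)"
  by (rule ext) (auto simp: scale_tuple_def split: prod.split)

lemma uncurry_affine_tuple: "(\<lambda>(i, p, q). X0 i p q + s * X1 i p q) =
    (\<lambda>v. (\<lambda>(i, p, q). X0 i p q) v + s * (\<lambda>(i, p, q). X1 i p q) v)"
  by (rule ext) (auto split: prod.split)

context vector_space begin

lemma hom_part_scale: "hom_part scale P j (\<lambda>v. t * x v) = scale (t ^ j) (hom_part scale P j x)"
  unfolding hom_part_def scale_sum_right by (intro sum.cong refl) (auto simp: monomial_value_scale)

lemma peval_eq_sum_hom_part: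
  assumes "\<And>\<alpha>. \<alpha> \<in> Poly_Mapping.keys P \<Longrightarrow> mdeg \<alpha> \<le> K"
  shows "peval scale P x = (\<Sum>j\<le>K. hom_part scale P j x)"
  unfolding peval_monomial_value hom_part_def
  by (rule sum.group[symmetric]) (use assms in auto)

lemma peval_scale:
  assumes "\<And>\<alpha>. \<alpha> \<in> Poly_Mapping.keys P \<Longrightarrow> mdeg \<alpha> \<le> K"
  shows "peval scale P (\<lambda>v. t * x v) = (\<Sum>j\<le>K. scale (t ^ j) (hom_part scale P j x))"
  using peval_eq_sum_hom_part[OF assms, where x="\<lambda>v. t * x v"] by (simp add: hom_part_scale)

lemma hom_part_local:
  assumes "\<And>\<alpha>. \<alpha> \<in> Poly_Mapping.keys P \<Longrightarrow> Poly_Mapping.keys \<alpha> \<subseteq> V" "\<And>v. v \<in> V \<Longrightarrow> x v = y v"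
  shows "hom_part scale P j x = hom_part scale P j y"
  unfolding hom_part_def using assms by (intro sum.cong refl arg_cong2[where f=scale] monomial_value_local) auto

lemma sum_poly_scale_expand:
  assumes "finite A"
  shows "\<exists>K w. \<forall>s. (\<Sum>\<alpha>\<in>A. scale (poly (P \<alpha>) s) (c \<alpha>)) =
      (\<Sum>k\<le>K. scale (s ^ k) (w k))"
proof (intro exI allI)
  fix s :: 'a
  define K where "K = (\<Sum>\<alpha>\<in>A. degree (P \<alpha>))"
  have pe: "poly (P \<alpha>) s = (\<Sum>k\<le>K. coeff (P \<alpha>) k * s ^ k)" if "\<alpha> \<in> A" for \<alpha>
  proof -
    have "degree (P \<alpha>) \<le> K" unfolding K_def using assms that by (auto intro: member_le_sum)
    hence "(\<Sum>k\<le>degree (P \<alpha>). coeff (P \<alpha>) k * s ^ k) =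
        (\<Sum>k\<le>K. coeff (P \<alpha>) k * s ^ k)"
      by (intro sum.mono_neutral_left) (auto simp: coeff_eq_0)
    thus ?thesis by (simp add: poly_altdef)
  qed
  have "(\<Sum>\<alpha>\<in>A. scale (poly (P \<alpha>) s) (c \<alpha>)) =
      (\<Sum>\<alpha>\<in>A. \<Sum>k\<le>K. scale (s ^ k) (scale (coeff (P \<alpha>) k) (c \<alpha>)))"
    by (intro sum.cong refl) (simp add: pe scale_sum_left mult.commute)
  also have "\<dots> = (\<Sum>k\<le>K. scale (s ^ k) (\<Sum>\<alpha>\<in>A. scale (coeff (P \<alpha>) k) (c \<alpha>)))"
    by (subst sum.swap) (simp add: scale_sum_right)
  finally show "(\<Sum>\<alpha>\<in>A. scale (poly (P \<alpha>) s) (c \<alpha>)) =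
      (\<Sum>k\<le>K. scale (s ^ k) ((\<lambda>k. \<Sum>\<alpha>\<in>A. scale (coeff (P \<alpha>) k) (c \<alpha>)) k))"
    by simp
qed

lemma hom_part_affine:
  "\<exists>K w. \<forall>s. hom_part scale P j (\<lambda>v. x0 v + s * x1 v) = (\<Sum>k\<le>K. scale (s ^ k) (w k))"
  unfolding hom_part_def monomial_value_affine by (rule sum_poly_scale_expand) simp

end

section \<open>Polynomial identities over an infinite field\<close>

locale vector_space_infinite_field = Vector_Spaces.vector_space sc for sc :: "'k::field \<Rightarrow> 'n::ab_group_add \<Rightarrow> 'n" +
  assumes infinite_scalars: "infinite (UNIV :: 'k set)"
begin

lemma ex_nonzero_power_neq:
  assumes "j < K"
  shows "\<exists>c::'k. c \<noteq> 0 \<and> c ^ j \<noteq> c ^ K"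
proof -
  let ?p = "monom (1::'k) K - monom 1 j"
  have "coeff ?p K = 1" using assms by (auto simp: coeff_monom)
  hence "?p \<noteq> 0" by (metis coeff_0 zero_neq_one)
  hence fin: "finite {x. poly ?p x = 0}" by (rule poly_roots_finite)
  hence "finite (insert 0 {x. poly ?p x = 0})" by simp
  then obtain c where "c \<notin> insert 0 {x. poly ?p x = 0}"
    using infinite_scalars by (metis ex_new_if_finite)
  thus ?thesis by (auto simp: poly_monom)
qed

text \<open>Substituting c t for t and subtracting c^(K+1) times the original identity removes the top
  coefficient; c is chosen with c^i \<noteq> c^(K+1), which keeps coefficient i alive.\<close>
lemma poly_vanishing_coeff_zero:
  "(\<And>t. t \<noteq> 0 \<Longrightarrow> (\<Sum>j\<le>K. sc (t ^ j) (v j)) = 0) \<Longrightarrow> j \<le> K \<Longrightarrow> v j = 0"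
proof (induction K arbitrary: v j)
  case 0
  then show ?case using "0.prems"(1)[of 1] by simp
next
  case (Suc K)
  have low: "v i = 0" if iK: "i \<le> K" for i
  proof -
    obtain c :: 'k where c: "c \<noteq> 0" "c ^ i \<noteq> c ^ Suc K"
      using ex_nonzero_power_neq[of i "Suc K"] iK by (meson le_imp_less_Suc)
    have "(\<Sum>j\<le>K. sc (t ^ j) (sc (c ^ j - c ^ Suc K) (v j))) = 0" if t: "t \<noteq> 0" for t
    proof -
      have "(\<Sum>j\<le>Suc K. sc ((c*t) ^ j) (v j)) - sc (c ^ Suc K) (\<Sum>j\<le>Suc K. sc (t ^ j) (v j)) = 0"
        using Suc.prems(1)[of "c*t"] Suc.prems(1)[of t] t c by simp
      moreover have "(\<Sum>j\<le>Suc K. sc ((c*t) ^ j) (v j)) - sc (c ^ Suc K) (\<Sum>j\<le>Suc K. sc (t ^ j) (v j))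
          = (\<Sum>j\<le>Suc K. sc (t ^ j) (sc (c ^ j - c ^ Suc K) (v j)))"
        unfolding scale_sum_right sum_subtractf[symmetric] scale_scale scale_left_diff_distrib[symmetric]
        by (rule sum.cong) (simp_all add: power_mult_distrib algebra_simps del: power_Suc)
      moreover have "(\<Sum>j\<le>Suc K. sc (t ^ j) (sc (c ^ j - c ^ Suc K) (v j)))
          = (\<Sum>j\<le>K. sc (t ^ j) (sc (c ^ j - c ^ Suc K) (v j)))"
        by simp
      ultimately show ?thesis by simp
    qed
    from Suc.IH[OF this iK] c show ?thesis by simp
  qed
  have "v (Suc K) = 0"
    using Suc.prems(1)[of 1] low by simp
  with low Suc.prems(2) show ?case by (metis le_SucE)
qed

lemma poly_coeffs_eq:
  assumes "\<And>t. t \<noteq> 0 \<Longrightarrow> (\<Sum>j\<le>K. sc (t ^ j) (v j)) = (\<Sum>j\<le>K. sc (t ^ j) (w j))" "j \<le> K"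
  shows "v j = w j"
proof -
  have "(\<lambda>j. v j - w j) j = 0"
  proof (rule poly_vanishing_coeff_zero[where K=K and v="\<lambda>j. v j - w j"])
    fix t :: 'k assume "t \<noteq> 0"
    thus "(\<Sum>j\<le>K. sc (t ^ j) ((\<lambda>j. v j - w j) j)) = 0"
      using assms(1)[of t] by (simp add: scale_right_diff_distrib sum_subtractf)
  qed (rule assms(2))
  thus ?thesis by simp
qed

lemma poly_coeff0_eq_const:
  assumes "\<And>t. t \<noteq> 0 \<Longrightarrow> (\<Sum>j\<le>K. sc (t ^ j) (v j)) = C"
  shows "v 0 = C"
proof -
  have "v 0 = (if (0::nat) = 0 then C else 0)"
    by (rule poly_coeffs_eq[where K=K and w="\<lambda>j. if j = 0 then C else 0" and j=0])
      (use assms in \<open>simp_all add: if_distrib sum.delta cong: if_cong\<close>)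
  thus ?thesis by simp
qed

definition distinct_scalars :: "nat \<Rightarrow> 'k" where "distinct_scalars = (SOME f. inj f)"

lemma inj_distinct_scalars: "inj distinct_scalars"
proof -
  obtain f :: "nat \<Rightarrow> 'k" where "inj f" using infinite_countable_subset[OF infinite_scalars] by blast
  thus ?thesis unfolding distinct_scalars_def using someI_ex[of inj] by blast
qed

lemma exponent_class_sum_zero:
  assumes A: "finite A" and vanish: "\<And>t. t \<noteq> 0 \<Longrightarrow> (\<Sum>\<beta>\<in>A. sc (t ^ g \<beta> * y \<beta>) (c \<beta>)) = 0"
  shows "(\<Sum>\<beta>\<in>{\<beta> \<in> A. g \<beta> = k}. sc (y \<beta>) (c \<beta>)) = 0"
proof -
  define K where "K = (\<Sum>\<beta>\<in>A. g \<beta>)"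
  define w where "w k = (\<Sum>\<beta>\<in>{\<beta> \<in> A. g \<beta> = k}. sc (y \<beta>) (c \<beta>))" for k
  have g_le: "g \<beta> \<le> K" if "\<beta> \<in> A" for \<beta>
    unfolding K_def using A that by (auto intro: member_le_sum)
  show ?thesis
  proof (cases "k \<le> K")
    case True
    have "w k = 0"
    proof (rule poly_vanishing_coeff_zero[OF _ True])
      fix t :: 'k assume "t \<noteq> 0"
      have "(\<Sum>k\<le>K. sc (t ^ k) (w k)) =
          (\<Sum>k\<le>K. \<Sum>\<beta>\<in>{\<beta> \<in> A. g \<beta> = k}. sc (t ^ g \<beta> * y \<beta>) (c \<beta>))"
        unfolding w_def scale_sum_right by (intro sum.cong refl) auto
      also have "\<dots> = (\<Sum>\<beta>\<in>A. sc (t ^ g \<beta> * y \<beta>) (c \<beta>))"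
        by (rule sum.group) (use A g_le in auto)
      finally show "(\<Sum>k\<le>K. sc (t ^ k) (w k)) = 0" using vanish[OF \<open>t \<noteq> 0\<close>] by simp
    qed
    thus ?thesis by (simp add: w_def)
  next
    case False
    hence "{\<beta> \<in> A. g \<beta> = k} = {}" using g_le by fastforce
    thus ?thesis by (simp only: sum.empty)
  qed
qed

lemma mpoly_eval_zero_coeff_zero:
  "finite V \<Longrightarrow> finite A \<Longrightarrow> inj_on e A \<Longrightarrow> (\<forall>\<beta>\<in>A. \<forall>v. v \<notin> V \<longrightarrow> e \<beta> v = 0) \<Longrightarrow>
   (\<forall>x. (\<Sum>\<beta>\<in>A. sc (\<Prod>v\<in>V. x v ^ e \<beta> v) (c \<beta>)) = 0) \<Longrightarrow> \<alpha> \<in> A \<Longrightarrow> c \<alpha> = 0"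
proof (induction V arbitrary: A e c \<alpha> rule: finite_induct)
  case empty
  have "\<beta> = \<alpha>" if b: "\<beta> \<in> A" for \<beta>
  proof -
    have "e \<beta> = e \<alpha>"
    proof
      fix v show "e \<beta> v = e \<alpha> v" using empty.prems(3) b empty.prems(5) by simp
    qed
    thus ?thesis using empty.prems(2) b empty.prems(5) by (meson inj_onD)
  qed
  hence A: "A = {\<alpha>}" using empty.prems(5) by blast
  have "(\<Sum>\<beta>\<in>A. sc (\<Prod>v\<in>{}. (\<lambda>_. 0::'k) v ^ e \<beta> v) (c \<beta>)) = 0"
    using empty.prems(4) by (rule spec)
  thus ?case unfolding A by simp
next
  case (insert v0 V' A e c \<alpha>)
  define k0 where "k0 = e \<alpha> v0"
  define Ak where "Ak = {\<beta> \<in> A. e \<beta> v0 = k0}"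
  define e' where "e' \<beta> = (e \<beta>)(v0 := 0)" for \<beta>
  have class_vanishes: "\<forall>x. (\<Sum>\<beta>\<in>Ak. sc (\<Prod>v\<in>V'. x v ^ e' \<beta> v) (c \<beta>)) = 0"
  proof
    fix x :: "'a \<Rightarrow> 'k"
    have "(\<Sum>\<beta>\<in>{\<beta> \<in> A. e \<beta> v0 = k0}. sc (\<Prod>v\<in>V'. x v ^ e \<beta> v) (c \<beta>)) =
        0"
    proof (rule exponent_class_sum_zero[OF insert.prems(1)])
      fix t :: 'k
      have "(\<Prod>v\<in>V'. (x(v0 := t)) v ^ e \<beta> v) = (\<Prod>v\<in>V'. x v ^ e \<beta> v)" for \<beta>
        using insert.hyps(2) by (intro prod.cong) auto
      hence "(\<Sum>\<beta>\<in>A. sc (t ^ e \<beta> v0 * (\<Prod>v\<in>V'. x v ^ e \<beta> v)) (c \<beta>)) =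
          (\<Sum>\<beta>\<in>A. sc (\<Prod>v\<in>insert v0 V'. (x(v0 := t)) v ^ e \<beta> v) (c \<beta>))"
        using insert.hyps by simp
      thus "(\<Sum>\<beta>\<in>A. sc (t ^ e \<beta> v0 * (\<Prod>v\<in>V'. x v ^ e \<beta> v)) (c \<beta>)) = 0"
        using insert.prems(4) by simp
    qed
    moreover have "(\<Sum>\<beta>\<in>Ak. sc (\<Prod>v\<in>V'. x v ^ e' \<beta> v) (c \<beta>)) =
        (\<Sum>\<beta>\<in>{\<beta> \<in> A. e \<beta> v0 = k0}. sc (\<Prod>v\<in>V'. x v ^ e \<beta> v) (c \<beta>))"
      unfolding Ak_def e'_def using insert.hyps
      by (intro sum.cong refl arg_cong2[where f=sc] prod.cong) auto
    ultimately show "(\<Sum>\<beta>\<in>Ak. sc (\<Prod>v\<in>V'. x v ^ e' \<beta> v) (c \<beta>)) = 0" by simp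
  qed
  show ?case
  proof (rule insert.IH[where A=Ak and e=e'])
    show "finite Ak" using insert.prems(1) unfolding Ak_def by simp
    show "inj_on e' Ak"
    proof (rule inj_onI)
      fix \<beta>1 \<beta>2 assume b: "\<beta>1 \<in> Ak" "\<beta>2 \<in> Ak" "e' \<beta>1 = e' \<beta>2"
      have "e \<beta> = (e' \<beta>)(v0 := k0)" if "\<beta> \<in> Ak" for \<beta>
        using that unfolding Ak_def e'_def by auto
      hence "e \<beta>1 = e \<beta>2" using b by metis
      thus "\<beta>1 = \<beta>2" using insert.prems(2) b unfolding Ak_def by (auto dest: inj_onD)
    qed
    show "\<forall>\<beta>\<in>Ak. \<forall>v. v \<notin> V' \<longrightarrow> e' \<beta> v = 0"
      using insert.prems(3) unfolding Ak_def e'_def by auto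
    show "\<forall>x. (\<Sum>\<beta>\<in>Ak. sc (\<Prod>v\<in>V'. x v ^ e' \<beta> v) (c \<beta>)) =
        0" by (rule class_vanishes)
    show "\<alpha> \<in> Ak" using insert.prems(5) unfolding Ak_def k0_def by simp
  qed
qed

lemma hom_part_nonzero:
  assumes V: "\<And>\<beta>. \<beta> \<in> Poly_Mapping.keys P \<Longrightarrow> Poly_Mapping.keys \<beta> \<subseteq> V" "finite V"
    and \<alpha>: "\<alpha> \<in> Poly_Mapping.keys P" "mdeg \<alpha> = j"
  shows "\<exists>x. hom_part sc P j x \<noteq> 0"
proof (rule ccontr)
  assume "\<not> (\<exists>x. hom_part sc P j x \<noteq> 0)"
  hence zero: "hom_part sc P j x = 0" for x by simp
  define A where "A = {\<beta> \<in> Poly_Mapping.keys P. mdeg \<beta> = j}"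
  have "hom_part sc P j x =
      (\<Sum>\<beta>\<in>A. sc (\<Prod>v\<in>V. x v ^ Poly_Mapping.lookup \<beta> v) (Poly_Mapping.lookup P \<beta>))" for x
    unfolding hom_part_def A_def using V
    by (intro sum.cong refl arg_cong2[where f=sc] monomial_value_over) auto
  moreover have "Poly_Mapping.lookup \<beta> v = 0" if "\<beta> \<in> A" "v \<notin> V" for \<beta> v
  proof -
    have "v \<notin> Poly_Mapping.keys \<beta>" using V(1) that by (auto simp: A_def)
    thus ?thesis by (simp add: in_keys_iff)
  qed
  ultimately have "Poly_Mapping.lookup P \<alpha> = 0"
    using V(2) \<alpha> zero
    by (intro mpoly_eval_zero_coeff_zero[where V=V and A=A and e=Poly_Mapping.lookup])
      (auto simp: A_def in_keys_iff intro: inj_onI poly_mapping_eqI)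
  thus False using \<alpha>(1) by (simp add: in_keys_iff)
qed

end

section \<open>Homogeneous nc functions are nc polynomials\<close>

locale local_nc_function = vector_space_infinite_field sc for sc :: "'k::field \<Rightarrow> 'n::ab_group_add \<Rightarrow> 'n" +
  fixes d :: nat and h :: "nat \<Rightarrow> (nat \<Rightarrow> nat \<Rightarrow> nat \<Rightarrow> 'k) \<Rightarrow> nat \<Rightarrow> nat \<Rightarrow> 'n"
  assumes nc: "nc_function sc d h"
    and entrywise_local: "\<And>n X X' a b. (\<And>i a b. i < d \<Longrightarrow> a < n \<Longrightarrow> b < n \<Longrightarrow> X i a b = X' i a b) \<Longrightarrow>
               a < n \<Longrightarrow> b < n \<Longrightarrow> h n X a b = h n X' a b"
begin

lemma h_direct_sum: "a < n+m \<Longrightarrow> b < n+m \<Longrightarrow>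
   h (n+m) (\<lambda>i. blockdiag n (X i) (Y i)) a b = blockdiag n (h n X) (h m Y) a b"
  by (rule nc[unfolded nc_function_def, THEN conjunct1, rule_format])

lemma h_similarity: "minv n S T \<Longrightarrow> a < n \<Longrightarrow> b < n \<Longrightarrow>
   h n (\<lambda>i. mmult n (mmult n S (X i)) T) a b = ract sc n (lact sc n S (h n X)) T a b"
  by (rule nc[unfolded nc_function_def, THEN conjunct2, rule_format])

text \<open>As Y S = S X, the shear [[I, 0], [S, I]] commutes with X \<oplus> Y; compare the lower left
  blocks in the similarity rule for it.\<close>
lemma intertwining:
  assumes YS: "\<And>i a b. i < d \<Longrightarrow> a < m \<Longrightarrow> b < n \<Longrightarrow> (\<Sum>c<m. Y i a c * S c b) = (\<Sum>c<n. S a c * X i c b)"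
    and ab: "a < m" "b < n"
  shows "(\<Sum>c<m. sc (S c b) (h m Y a c)) = (\<Sum>c<n. sc (S a c) (h n X c b))"
proof -
  define Z where "Z = (\<lambda>i. blockdiag n (X i) (Y i))"
  define T where "T = shear n m S 1"
  define T' where "T' = shear n m S (-1)"
  have conj: "mmult (n+m) (mmult (n+m) T (Z i)) T' a' b' = Z i a' b'"
    if "i < d" "a' < n+m" "b' < n+m" for i a' b'
    unfolding T_def T'_def Z_def by (rule shear_conj_blockdiag) (use YS that in auto)
  have na: "n + a < n + m" and bn: "b < n + m" using ab by simp_all
  have "h (n+m) (\<lambda>i. mmult (n+m) (mmult (n+m) T (Z i)) T') (n+a) b = h (n+m) Z (n+a) b"
    by (rule entrywise_local) (use conj na bn in auto)
  also have "\<dots> = 0" unfolding Z_def using h_direct_sum[OF na bn] ab by (simp add: blockdiag_lower_left)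
  finally have "ract sc (n+m) (lact sc (n+m) T (h (n+m) Z)) T' (n+a) b = 0"
    using h_similarity[OF minv_shear na bn, where X=Z] unfolding T_def T'_def by simp
  moreover have "ract sc (n+m) (lact sc (n+m) T (h (n+m) Z)) T' (n+a) b =
      (\<Sum>e<n. sc (S a e) (h n X e b)) - (\<Sum>c<m. sc (S c b) (h m Y a c))"
    unfolding T_def T'_def by (rule shear_conj_lower_left) (use h_direct_sum ab in \<open>simp_all add: Z_def\<close>)
  ultimately show ?thesis by simp
qed

definition model_coeff :: "nat \<Rightarrow> nat list \<Rightarrow> 'n" where
  "model_coeff j u = h (nwords_upto d j) (shift_model d j) (word_index d j u) (word_index d j [])"

lemma nilpotent_eval_via_model:
  assumes nil: "nilpotent_tuple d j n X" and ab: "a < n" "b < n"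
  shows "h n X a b = (\<Sum>u\<in>words_upto d j. sc (matword n X u a b) (model_coeff j u))"
proof -
  define M where "M = nwords_upto d j"
  define S where "S = (\<lambda>c q. matword n X (index_word d j q) c b)"
  have e0: "word_index d j [] < M" using word_index_less[OF Nil_in_words_upto] M_def by simp
  have "(\<Sum>c<n. sc (S c (word_index d j [])) (h n X a c)) =
      (\<Sum>c<M. sc (S a c) (h M (shift_model d j) c (word_index d j [])))"
    by (rule intertwining[where Y=X and X="shift_model d j"])
      (use matword_intertwines_shift_model[OF nil] ab e0 in \<open>auto simp: S_def M_def\<close>)
  moreover have "(\<Sum>c<n. sc (S c (word_index d j [])) (h n X a c)) = h n X a b"
  proof -
    have "(\<Sum>c<n. sc (S c (word_index d j [])) (h n X a c)) = (\<Sum>c<n. if c = b then h n X a b else 0)"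
      by (intro sum.cong) (auto simp: S_def index_word_word_index[OF Nil_in_words_upto] matword_Nil idm_def)
    thus ?thesis using ab by (simp add: sum.delta)
  qed
  moreover have "(\<Sum>c<M. sc (S a c) (h M (shift_model d j) c (word_index d j []))) =
      (\<Sum>u\<in>words_upto d j. sc (matword n X u a b) (h M (shift_model d j) (word_index d j u) (word_index d j [])))"
  proof -
    have "(\<Sum>u\<in>words_upto d j. sc (matword n X u a b) (h M (shift_model d j) (word_index d j u) (word_index d j []))) =
        (\<Sum>u\<in>words_upto d j. sc (S a (word_index d j u)) (h M (shift_model d j) (word_index d j u) (word_index d j [])))"
      by (intro sum.cong) (auto simp: S_def index_word_word_index)
    also have "\<dots> = (\<Sum>c<M. sc (S a c) (h M (shift_model d j) c (word_index d j [])))"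
      using sum.reindex_bij_betw[OF bij_word_index, of "\<lambda>c. sc (S a c) (h M (shift_model d j) c (word_index d j []))"] M_def by simp
    finally show ?thesis by simp
  qed
  ultimately show ?thesis unfolding M_def model_coeff_def by simp
qed

end

locale homogeneous_nc_function = local_nc_function sc d h for sc :: "'k::field \<Rightarrow> 'n::ab_group_add \<Rightarrow> 'n" and d h +
  fixes j :: nat
  assumes homogeneous: "\<And>n t X a b. a < n \<Longrightarrow> b < n \<Longrightarrow> h n (scale_tuple t X) a b =
      sc (t ^ j) (h n X a b)"
begin

lemma nilpotent_eval_nc_poly:
  assumes nil: "nilpotent_tuple d j n X" and ab: "a < n" "b < n"
  shows "h n X a b = (\<Sum>u\<in>words d j. sc (matword n X u a b) (model_coeff j u))"
proof -
  define v where "v k =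
      (\<Sum>u\<in>{u \<in> words_upto d j. length u = k}. sc (matword n X u a b) (model_coeff j u))" for k
  define w where "w k = (if k = j then h n X a b else 0)" for k
  have "v j = w j"
  proof (rule poly_coeffs_eq[where K=j])
    fix t :: 'k assume "t \<noteq> 0"
    have "(\<Sum>k\<le>j. sc (t ^ k) (v k)) =
        (\<Sum>k\<le>j. \<Sum>u\<in>{u \<in> words_upto d j. length u = k}. sc (t ^ length u) (sc (matword n X u a b) (model_coeff j u)))"
      unfolding v_def scale_sum_right by (intro sum.cong refl) auto
    also have "\<dots> = (\<Sum>u\<in>words_upto d j. sc (t ^ length u) (sc (matword n X u a b) (model_coeff j u)))"
      by (rule sum.group) (auto simp: finite_words_upto words_upto_def[symmetric], auto simp: words_upto_def)
    also have "\<dots> = (\<Sum>u\<in>words_upto d j. sc (matword n (scale_tuple t X) u a b) (model_coeff j u))"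
      by (simp add: matword_scale)
    also have "\<dots> = h n (scale_tuple t X) a b"
      using nilpotent_eval_via_model[OF nilpotent_tuple_scale[OF nil] ab] by simp
    also have "\<dots> = sc (t ^ j) (h n X a b)" using homogeneous ab by simp
    also have "\<dots> = (\<Sum>k\<le>j. sc (t ^ k) (w k))"
      by (simp add: w_def if_distrib sum.delta cong: if_cong)
    finally show "(\<Sum>k\<le>j. sc (t ^ k) (v k)) = (\<Sum>k\<le>j. sc (t ^ k) (w k))" .
  qed simp
  thus ?thesis by (simp add: v_def w_def words_eq_words_upto_length)
qed

end

locale polynomial_homogeneous_nc_function = homogeneous_nc_function sc d h j for sc :: "'k::field \<Rightarrow> 'n::ab_group_add \<Rightarrow> 'n" and d h j +
  assumes polynomial_on_lines: "\<And>n X0 X1 a b. a < n \<Longrightarrow> b < n \<Longrightarrow>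
     \<exists>K w. \<forall>s. h n (\<lambda>i c c'. X0 i c c' + s * X1 i c c') a b = (\<Sum>k\<le>K. sc (s ^ k) (w k))"
begin

text \<open>The eigenvector u_k of the bidiagonal block for s c_k gives the intertwiner u_k \<otimes> I from
  s c_k X to the Kronecker tuple; these identities form a unitriangular system for the blocks of
  row a, whose solution puts h X into the last one.\<close>
lemma bidiag_corner_eq:
  assumes ab: "a < n" "b < n" and s: "s \<noteq> 0"
  shows "h (Suc j * n) (\<lambda>i. kron n (bidiag s distinct_scalars) (X i)) a (j*n+b) = h n X a b"
proof -
  define m where "m = Suc j * n"
  define Y where "Y = (\<lambda>i. kron n (bidiag s distinct_scalars) (X i))"
  define u where "u = bidiag_eigvec s distinct_scalars"
  define B where "B = bidiag_pow j s distinct_scalars j 0"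
  have a_m: "a < m" using ab unfolding m_def by (metis le_add1 less_le_trans mult_Suc)
  define G where "G r = h m Y a (r*n+b) - sc (B r) (h n X a b)" for r
  have eqs: "(\<Sum>r<Suc j. sc (u k r) (G r)) = 0" if k: "k < Suc j" for k
  proof -
    define \<mu> where "\<mu> = s * distinct_scalars k"
    have "(\<Sum>r<Suc j. sc (u k r) (h m Y a (r*n+b))) = (\<Sum>c<m. sc (kron_col n (u k) c b) (h m Y a c))"
      unfolding m_def by (rule sum_scale_kron_col_right[OF ab(2), symmetric])
    also have "\<dots> = (\<Sum>c<n. sc (kron_col n (u k) a c) (h n (scale_tuple \<mu> X) c b))"
    proof (rule intertwining[OF _ a_m ab(2)])
      fix i a' b' assume "a' < m" "b' < n"
      thus "(\<Sum>c<m. Y i a' c * kron_col n (u k) c b') =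
          (\<Sum>c<n. kron_col n (u k) a' c * scale_tuple \<mu> X i c b')"
        unfolding Y_def m_def u_def \<mu>_def scale_tuple_def
        by (intro kron_mult_kron_col bidiag_eigvec_eigen s inj_distinct_scalars k)
    qed
    also have "\<dots> = sc (\<mu> ^ j * u k 0) (h n X a b)"
      using sum_scale_kron_col_left[OF ab(1)] homogeneous[OF ab] by (simp add: mult.commute)
    also have "\<dots> = sc (\<Sum>r<Suc j. B r * u k r) (h n X a b)"
      using bidiag_pow_eigvec[OF s inj_distinct_scalars _ k, of 0 j] by (simp add: B_def u_def \<mu>_def)
    also have "\<dots> = (\<Sum>r<Suc j. sc (u k r) (sc (B r) (h n X a b)))"
      by (simp add: scale_sum_left mult.commute del: sum.lessThan_Suc)
    finally show ?thesis unfolding G_def scale_right_diff_distrib sum_subtractf by simp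
  qed
  have "G j = 0"
    by (rule unitriangular_system_zero[where U=u, OF eqs]) (auto simp: u_def bidiag_eigvec_def)
  moreover have "B j = 1"
    using bidiag_pow_upper[where p=0 and q=j and k=j and j=j] by (simp add: B_def)
  ultimately show ?thesis unfolding G_def m_def Y_def by simp
qed

lemma homogeneous_nc_poly_rep:
  assumes ab: "a < n" "b < n"
  shows "h n X a b = (\<Sum>w\<in>words d j. sc (matword n X w a b) (model_coeff j w))"
proof -
  define m where "m = Suc j * n"
  define Y0 where "Y0 = (\<lambda>i. kron n (bidiag 0 distinct_scalars) (X i))"
  define Y1 where "Y1 = (\<lambda>i. kron n (\<lambda>p q. if p = q then distinct_scalars p else 0) (X i))"
  have Ys: "(\<lambda>i. kron n (bidiag s distinct_scalars) (X i)) = (\<lambda>i c c'. Y0 i c c' + s * Y1 i c c')" for s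
    by (auto simp: Y0_def Y1_def kron_def bidiag_def fun_eq_iff ring_distribs)
  have a_m: "a < m" using ab unfolding m_def by (metis le_add1 less_le_trans mult_Suc)
  have jb_m: "j*n+b < m" using ab unfolding m_def by simp
  obtain K w where w: "\<And>s. h m (\<lambda>i c c'. Y0 i c c' + s * Y1 i c c') a (j*n+b) =
      (\<Sum>k\<le>K. sc (s ^ k) (w k))"
    using polynomial_on_lines[OF a_m jb_m] by blast
  have "h n X a b = w 0"
  proof (rule poly_coeff0_eq_const[symmetric])
    fix t :: 'k assume "t \<noteq> 0"
    thus "(\<Sum>k\<le>K. sc (t ^ k) (w k)) = h n X a b"
      using bidiag_corner_eq[OF ab, of t X] w[of t] Ys[of t] unfolding m_def by simp
  qed
  also have "\<dots> = h m Y0 a (j*n+b)"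
  proof -
    have "(\<Sum>k\<le>K. sc (0 ^ k) (w k)) = (\<Sum>k\<le>K. if k = 0 then w 0 else 0)"
      by (intro sum.cong) auto
    thus ?thesis using w[of 0] by (simp add: sum.delta)
  qed
  also have "\<dots> = (\<Sum>w\<in>words d j. sc (matword m Y0 w a (j*n+b)) (model_coeff j w))"
    unfolding m_def Y0_def by (rule nilpotent_eval_nc_poly[OF nilpotent_tuple_kron_shift a_m[unfolded m_def] jb_m[unfolded m_def]])
  also have "\<dots> = (\<Sum>w\<in>words d j. sc (matword n X w a b) (model_coeff j w))"
    by (intro sum.cong refl) (use matword_kron_shift_corner[OF _ ab] in \<open>auto simp: m_def Y0_def words_def\<close>)
  finally show ?thesis .
qed

end

section \<open>The homogeneous components of a polynomial nc function\<close>

locale polynomial_nc_function = vector_space_infinite_field sc for sc :: "'k::field \<Rightarrow> 'n::ab_group_add \<Rightarrow> 'n" +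
  fixes d :: nat and f :: "nat \<Rightarrow> (nat \<Rightarrow> nat \<Rightarrow> nat \<Rightarrow> 'k) \<Rightarrow> nat \<Rightarrow> nat \<Rightarrow> 'n" and L :: "nat \<Rightarrow> nat option"
  assumes nc_f: "nc_function sc d f" and poly_f: "\<forall>n. is_poly_fun_deg sc d n (f n) (L n)"
begin

definition coeff_poly :: "nat \<Rightarrow> nat \<Rightarrow> nat \<Rightarrow> ((nat \<times> nat \<times> nat) \<Rightarrow>\<^sub>0 nat) \<Rightarrow>\<^sub>0 'n" where
  "coeff_poly n = (SOME Q. (\<forall>a<n. \<forall>b<n. \<forall>\<alpha>\<in>Poly_Mapping.keys (Q a b). Poly_Mapping.keys \<alpha> \<subseteq> mvars d n) \<and>
          mat_poly_degree n Q (L n) \<and>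
          (\<forall>X. \<forall>a<n. \<forall>b<n. f n X a b = peval sc (Q a b) (\<lambda>(i, j, k). X i j k)))"

lemma coeff_poly: "(\<forall>a<n. \<forall>b<n. \<forall>\<alpha>\<in>Poly_Mapping.keys (coeff_poly n a b). Poly_Mapping.keys \<alpha> \<subseteq> mvars d n) \<and>
          mat_poly_degree n (coeff_poly n) (L n) \<and>
          (\<forall>X. \<forall>a<n. \<forall>b<n. f n X a b = peval sc (coeff_poly n a b) (\<lambda>(i, j, k). X i j k))"
  unfolding coeff_poly_def using poly_f[rule_format, of n, unfolded is_poly_fun_deg_def] by (rule someI_ex)

text \<open>Degree \<open>-\<infinity>\<close> (\<open>None\<close>) is sent to 0; harmless, as then all entry polynomials vanish.\<close>
definition deg_bound :: "nat \<Rightarrow> nat" where "deg_bound n = (case L n of None \<Rightarrow> 0 | Some D \<Rightarrow> D)"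

definition hcomp :: "nat \<Rightarrow> nat \<Rightarrow> (nat \<Rightarrow> nat \<Rightarrow> nat \<Rightarrow> 'k) \<Rightarrow> nat \<Rightarrow> nat \<Rightarrow> 'n" where
  "hcomp n j X a b = hom_part sc (coeff_poly n a b) j (\<lambda>(i, p, q). X i p q)"

lemmas coeff_poly_vars = coeff_poly[THEN conjunct1] and coeff_poly_degree = coeff_poly[THEN conjunct2, THEN conjunct1]
  and coeff_poly_eval = coeff_poly[THEN conjunct2, THEN conjunct2]

lemma coeff_poly_keys: "a < n \<Longrightarrow> b < n \<Longrightarrow> \<alpha> \<in> Poly_Mapping.keys (coeff_poly n a b) \<Longrightarrow> Poly_Mapping.keys \<alpha> \<subseteq> mvars d n"
  by (rule coeff_poly_vars[rule_format])

lemma f_peval: "a < n \<Longrightarrow> b < n \<Longrightarrow> f n X a b =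
    peval sc (coeff_poly n a b) (\<lambda>(i, j, k). X i j k)"
  by (rule coeff_poly_eval[rule_format])

lemma coeff_poly_mdeg_le:
  assumes ab: "a < n" "b < n" and al: "\<alpha> \<in> Poly_Mapping.keys (coeff_poly n a b)"
  shows "mdeg \<alpha> \<le> deg_bound n"
proof (cases "L n")
  case None
  have "\<forall>a<n. \<forall>b<n. coeff_poly n a b =
      0" using coeff_poly_degree[of n] None unfolding mat_poly_degree_def by simp
  hence "coeff_poly n a b = 0" using ab by simp
  thus ?thesis using al by simp
next
  case (Some D)
  have "\<forall>a<n. \<forall>b<n. \<forall>\<alpha>\<in>Poly_Mapping.keys (coeff_poly n a b). mdeg \<alpha> \<le> D"
    using coeff_poly_degree[of n] Some unfolding mat_poly_degree_def by simp
  thus ?thesis using ab al Some unfolding deg_bound_def by simp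
qed

lemma coeff_poly_None: "L n = None \<Longrightarrow> a < n \<Longrightarrow> b < n \<Longrightarrow> coeff_poly n a b = 0"
  using coeff_poly_degree[of n] unfolding mat_poly_degree_def by simp

lemma f_scale_tuple:
  assumes "a < n" "b < n" "deg_bound n \<le> K"
  shows "f n (scale_tuple t X) a b = (\<Sum>j\<le>K. sc (t ^ j) (hcomp n j X a b))"
  unfolding f_peval[OF assms(1,2)] hcomp_def uncurry_scale_tuple
proof (rule peval_scale)
  fix \<alpha> assume "\<alpha> \<in> Poly_Mapping.keys (coeff_poly n a b)"
  thus "mdeg \<alpha> \<le> K" using coeff_poly_mdeg_le[OF assms(1,2)] assms(3) by (meson order_trans)
qed

lemma f_eq_sum_hcomp:
  assumes "a < n" "b < n" "deg_bound n \<le> K"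
  shows "f n X a b = (\<Sum>j\<le>K. hcomp n j X a b)"
proof -
  have "scale_tuple 1 X = X" by (simp add: scale_tuple_def)
  thus ?thesis using f_scale_tuple[OF assms, of 1 X] by simp
qed

lemma hcomp_zero:
  assumes "a < n" "b < n" "deg_bound n < j"
  shows "hcomp n j X a b = 0"
proof -
  have E: "{\<alpha> \<in> Poly_Mapping.keys (coeff_poly n a b). mdeg \<alpha> = j} = {}"
  proof -
    have "mdeg \<alpha> \<noteq> j" if "\<alpha> \<in> Poly_Mapping.keys (coeff_poly n a b)" for \<alpha>
      using coeff_poly_mdeg_le[OF assms(1,2) that] assms(3) by linarith
    thus ?thesis by blast
  qed
  show ?thesis unfolding hcomp_def hom_part_def E by simp
qed

lemma hcomp_homogeneous: "hcomp n j (scale_tuple t X) a b = sc (t ^ j) (hcomp n j X a b)"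
  unfolding hcomp_def uncurry_scale_tuple by (rule hom_part_scale)

lemma hcomp_local:
  assumes "\<And>i a b. i < d \<Longrightarrow> a < n \<Longrightarrow> b < n \<Longrightarrow> X i a b = X' i a b" "a < n" "b < n"
  shows "hcomp n j X a b = hcomp n j X' a b"
  unfolding hcomp_def
proof (rule hom_part_local)
  show "\<And>\<alpha>. \<alpha> \<in> Poly_Mapping.keys (coeff_poly n a b) \<Longrightarrow> Poly_Mapping.keys \<alpha> \<subseteq> mvars d n"
    using coeff_poly_keys assms by blast
  show "\<And>v. v \<in> mvars d n \<Longrightarrow> (case v of (i, p, q) \<Rightarrow> X i p q) =
      (case v of (i, p, q) \<Rightarrow> X' i p q)"
    using assms(1) by (auto simp: mvars_def)
qed

lemma hcomp_polynomial_on_lines: "\<exists>K w. \<forall>s. hcomp n j (\<lambda>i c c'. X0 i c c' + s * X1 i c c') a b =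
    (\<Sum>k\<le>K. sc (s ^ k) (w k))"
  unfolding hcomp_def uncurry_affine_tuple by (rule hom_part_affine)

lemma hcomp_nonzero:
  assumes "L n = Some D"
  shows "\<exists>X. \<exists>a<n. \<exists>b<n. hcomp n D X a b \<noteq> 0"
proof -
  have M: "mat_poly_degree n (coeff_poly n) (Some D)" using coeff_poly_degree[of n] assms by simp
  have "\<exists>a<n. \<exists>b<n. \<exists>\<alpha>\<in>Poly_Mapping.keys (coeff_poly n a b). mdeg \<alpha> = D"
    using M[unfolded mat_poly_degree_def option.case] by (rule conjunct2)
  then obtain a b \<alpha> where ab: "a < n" "b < n" "\<alpha> \<in> Poly_Mapping.keys (coeff_poly n a b)" "mdeg \<alpha> = D"
    by blast
  have fin: "finite (mvars d n)"
  proof -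
    have "mvars d n \<subseteq> {..<d} \<times> {..<n} \<times> {..<n}" by (auto simp: mvars_def)
    thus ?thesis by (rule finite_subset) simp
  qed
  obtain x where x: "hom_part sc (coeff_poly n a b) D x \<noteq> 0"
    using hom_part_nonzero[OF coeff_poly_keys[OF ab(1,2)] fin ab(3,4)] by blast
  have "(\<lambda>(i, p, q). (\<lambda>i p q. x (i, p, q)) i p q) = x" by (rule ext) auto
  hence "hcomp n D (\<lambda>i p q. x (i, p, q)) a b \<noteq> 0" unfolding hcomp_def using x by simp
  thus ?thesis using ab by blast
qed

lemma f_direct_sum: "a < n+m \<Longrightarrow> b < n+m \<Longrightarrow>
   f (n+m) (\<lambda>i. blockdiag n (X i) (Y i)) a b = blockdiag n (f n X) (f m Y) a b"
  by (rule nc_f[unfolded nc_function_def, THEN conjunct1, rule_format])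

lemma f_similarity: "minv n S T \<Longrightarrow> a < n \<Longrightarrow> b < n \<Longrightarrow>
   f n (\<lambda>i. mmult n (mmult n S (X i)) T) a b = ract sc n (lact sc n S (f n X)) T a b"
  by (rule nc_f[unfolded nc_function_def, THEN conjunct2, rule_format])

lemma hcomp_eqI:
  assumes ab: "a < n" "b < n" and K: "deg_bound n \<le> K"
    and expand: "\<And>t. f n (scale_tuple t X) a b = (\<Sum>i\<le>K. sc (t ^ i) (R i))"
    and vanish: "K < j \<Longrightarrow> R j = 0"
  shows "hcomp n j X a b = R j"
proof (cases "j \<le> K")
  case True
  show ?thesis
  proof (rule poly_coeffs_eq[OF _ True])
    fix t :: 'k
    show "(\<Sum>i\<le>K. sc (t ^ i) (hcomp n i X a b)) = (\<Sum>i\<le>K. sc (t ^ i) (R i))"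
      using f_scale_tuple[OF ab K, of t X] expand by simp
  qed
next
  case False
  thus ?thesis using hcomp_zero[OF ab] K vanish by simp
qed

lemma hcomp_direct_sum:
  assumes ab: "a < n+m" "b < n+m"
  shows "hcomp (n+m) j (\<lambda>i. blockdiag n (X i) (Y i)) a b = blockdiag n (hcomp n j X) (hcomp m j Y) a b"
proof (rule hcomp_eqI[OF ab])
  define K where "K = deg_bound n + deg_bound m + deg_bound (n+m)"
  show "deg_bound (n+m) \<le> K" by (simp add: K_def)
  fix t
  have "f (n+m) (scale_tuple t (\<lambda>i. blockdiag n (X i) (Y i))) a b =
      blockdiag n (f n (scale_tuple t X)) (f m (scale_tuple t Y)) a b"
  proof -
    have "scale_tuple t (\<lambda>i. blockdiag n (X i) (Y i)) =
        (\<lambda>i. blockdiag n (scale_tuple t X i) (scale_tuple t Y i))"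
      by (auto simp: scale_tuple_def blockdiag_def fun_eq_iff)
    thus ?thesis using f_direct_sum[OF ab] by simp
  qed
  also have "\<dots> = (\<Sum>i\<le>K. sc (t ^ i) (blockdiag n (hcomp n i X) (hcomp m i Y) a b))"
  proof (cases "a < n \<and> b < n")
    case True
    thus ?thesis using f_scale_tuple[of a n b K t X] by (simp add: blockdiag_def K_def)
  next
    case not_upper: False
    show ?thesis
    proof (cases "n \<le> a \<and> n \<le> b")
      case True
      have "a - n < m" "b - n < m" using ab True by linarith+
      thus ?thesis using f_scale_tuple[of "a-n" m "b-n" K t Y] not_upper True
        by (simp add: blockdiag_def K_def)
    next
      case False
      thus ?thesis using not_upper unfolding blockdiag_def by (simp only: if_False) simp
    qed
  qed
  finally show "f (n+m) (scale_tuple t (\<lambda>i. blockdiag n (X i) (Y i))) a b =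
      (\<Sum>i\<le>K. sc (t ^ i) (blockdiag n (hcomp n i X) (hcomp m i Y) a b))" .
  assume "K < j"
  thus "blockdiag n (hcomp n j X) (hcomp m j Y) a b = 0"
    using ab hcomp_zero[of a n b j X] hcomp_zero[of "a-n" m "b-n" j Y]
    by (simp add: blockdiag_def K_def less_diff_conv2)
qed

lemma hcomp_similarity:
  assumes ST: "minv n S T" and ab: "a < n" "b < n"
  shows "hcomp n j (\<lambda>i. mmult n (mmult n S (X i)) T) a b = ract sc n (lact sc n S (hcomp n j X)) T a b"
proof (rule hcomp_eqI[OF ab order_refl])
  fix t
  have "f n (scale_tuple t (\<lambda>i. mmult n (mmult n S (X i)) T)) a b =
      f n (\<lambda>i. mmult n (mmult n S (scale_tuple t X i)) T) a b"
    by (simp add: fun_eq_iff mmult_def scale_tuple_def sum_distrib_left sum_distrib_right ac_simps)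
  also have "\<dots> = ract sc n (lact sc n S (f n (scale_tuple t X))) T a b"
    by (rule f_similarity[OF ST ab])
  also have "\<dots> = (\<Sum>i\<le>deg_bound n. sc (t ^ i) (ract sc n (lact sc n S (hcomp n i X)) T a b))"
    by (rule ract_lact_power_sum) (simp add: f_scale_tuple)
  finally show "f n (scale_tuple t (\<lambda>i. mmult n (mmult n S (X i)) T)) a b =
      (\<Sum>i\<le>deg_bound n. sc (t ^ i) (ract sc n (lact sc n S (hcomp n i X)) T a b))" .
  assume "deg_bound n < j"
  thus "ract sc n (lact sc n S (hcomp n j X)) T a b = 0"
    unfolding ract_def lact_def using hcomp_zero by simp
qed

lemma hcomp_nc_function: "nc_function sc d (\<lambda>n. hcomp n j)"
  unfolding nc_function_def
proof (intro conjI allI impI)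
  fix n m :: nat and X Y a b assume "a < n + m" "b < n + m"
  thus "hcomp (n+m) j (\<lambda>i. blockdiag n (X i) (Y i)) a b = blockdiag n (hcomp n j X) (hcomp m j Y) a b"
    by (rule hcomp_direct_sum)
next
  fix n :: nat and S T :: "nat \<Rightarrow> nat \<Rightarrow> 'k" and X a b assume "minv n S T" "a < n" "b < n"
  thus "hcomp n j (\<lambda>i. mmult n (mmult n S (X i)) T) a b = ract sc n (lact sc n S (hcomp n j X)) T a b"
    by (rule hcomp_similarity)
qed

lemma hcomp_nc_poly_rep: "\<exists>c. \<forall>n X a b. a < n \<longrightarrow> b < n \<longrightarrow> hcomp n j X a b =
    (\<Sum>w\<in>words d j. sc (matword n X w a b) (c w))"
proof -
  interpret J: polynomial_homogeneous_nc_function sc d "\<lambda>n. hcomp n j" j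
  proof unfold_locales
    show "nc_function sc d (\<lambda>n. hcomp n j)" by (rule hcomp_nc_function)
  next
    fix n :: nat and X X' :: "nat \<Rightarrow> nat \<Rightarrow> nat \<Rightarrow> 'k" and a b :: nat
    assume "\<And>i a b. i < d \<Longrightarrow> a < n \<Longrightarrow> b < n \<Longrightarrow> X i a b = X' i a b" "a < n" "b < n"
    thus "hcomp n j X a b = hcomp n j X' a b" by (rule hcomp_local)
  next
    fix n a b :: nat and t :: 'k and X
    show "hcomp n j (scale_tuple t X) a b = sc (t ^ j) (hcomp n j X a b)" by (rule hcomp_homogeneous)
  next
    fix n a b :: nat and X0 X1 :: "nat \<Rightarrow> nat \<Rightarrow> nat \<Rightarrow> 'k"
    show "\<exists>K w. \<forall>s. hcomp n j (\<lambda>i c c'. X0 i c c' + s * X1 i c c') a b =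
        (\<Sum>k\<le>K. sc (s ^ k) (w k))"
      by (rule hcomp_polynomial_on_lines)
  qed
  show ?thesis using J.homogeneous_nc_poly_rep by blast
qed

definition hcomp_coeff :: "nat \<Rightarrow> nat list \<Rightarrow> 'n" where
  "hcomp_coeff j =
      (SOME c. \<forall>n X a b. a < n \<longrightarrow> b < n \<longrightarrow> hcomp n j X a b = (\<Sum>w\<in>words d j. sc (matword n X w a b) (c w)))"

definition nc_component :: "nat \<Rightarrow> nat list \<Rightarrow> 'n" where
  "nc_component j w = (if w \<in> words d j then hcomp_coeff j w else 0)"

lemma hcomp_eq_nceval: "a < n \<Longrightarrow> b < n \<Longrightarrow> hcomp n j X a b =
    nceval sc d j n (nc_component j) X a b"
proof -
  assume ab: "a < n" "b < n"
  have "\<forall>n X a b. a < n \<longrightarrow> b < n \<longrightarrow> hcomp n j X a b =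
      (\<Sum>w\<in>words d j. sc (matword n X w a b) (hcomp_coeff j w))"
    unfolding hcomp_coeff_def by (rule someI_ex[OF hcomp_nc_poly_rep])
  hence "hcomp n j X a b = (\<Sum>w\<in>words d j. sc (matword n X w a b) (hcomp_coeff j w))" using ab by blast
  also have "\<dots> = nceval sc d j n (nc_component j) X a b"
    unfolding nceval_def nc_component_def by (intro sum.cong refl) simp
  finally show ?thesis .
qed

lemma nc_component_hom: "hom_ncpoly d j (nc_component j)"
  by (simp add: hom_ncpoly_def nc_component_def)

lemma nc_component_vanishes:
  assumes "case L n of None \<Rightarrow> True | Some D \<Rightarrow> D < j"
  shows "nc_vanishes sc d j n (nc_component j)"
  unfolding nc_vanishes_def
proof (intro allI impI)
  fix X a b assume ab: "a < n" "b < n"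
  have "hcomp n j X a b = 0"
  proof (cases "L n")
    case None
    thus ?thesis unfolding hcomp_def hom_part_def using coeff_poly_None[OF None ab] by simp
  next
    case (Some D)
    thus ?thesis using assms hcomp_zero[OF ab] by (simp add: deg_bound_def)
  qed
  thus "nceval sc d j n (nc_component j) X a b = 0" using hcomp_eq_nceval[OF ab] by simp
qed

lemma nc_component_not_vanishes: "L n = Some D \<Longrightarrow> \<not> nc_vanishes sc d D n (nc_component D)"
  unfolding nc_vanishes_def using hcomp_nonzero hcomp_eq_nceval by metis

lemma f_eq_sum_nc_component:
  assumes ab: "a < n" "b < n"
  shows "f n X a b = (case L n of None \<Rightarrow> 0 | Some D \<Rightarrow> \<Sum>j\<le>D. nceval sc d j n (nc_component j) X a b)"
proof (cases "L n")
  case None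
  thus ?thesis using f_peval[OF ab] coeff_poly_None[OF None ab] by (simp add: peval_def)
next
  case (Some D)
  hence "f n X a b = (\<Sum>j\<le>D. hcomp n j X a b)" using f_eq_sum_hcomp[OF ab] by (simp add: deg_bound_def)
  thus ?thesis using Some hcomp_eq_nceval[OF ab] by simp
qed

lemma nceval_component_unique:
  assumes vanish: "\<And>j. (case L n of None \<Rightarrow> True | Some D \<Rightarrow> D < j) \<Longrightarrow> nc_vanishes sc d j n (gs j)"
    and expansion: "\<And>X. f n X a b =
        (case L n of None \<Rightarrow> 0 | Some D \<Rightarrow> (\<Sum>i\<le>D. nceval sc d i n (gs i) X a b))"
    and ab: "a < n" "b < n"
  shows "nceval sc d j n (gs j) X a b = nceval sc d j n (nc_component j) X a b"
proof (cases "\<exists>D. L n = Some D \<and> j \<le> D")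
  case True
  then obtain D where D: "L n = Some D" "j \<le> D" by blast
  show ?thesis
  proof (rule poly_coeffs_eq[where K=D and v="\<lambda>j. nceval sc d j n (gs j) X a b"
        and w="\<lambda>j. nceval sc d j n (nc_component j) X a b", OF _ D(2)])
    fix t :: 'k
    have "(\<Sum>j\<le>D. sc (t ^ j) (nceval sc d j n (gs j) X a b)) = f n (scale_tuple t X) a b"
      using expansion[of "scale_tuple t X"] D by (simp add: nceval_scale)
    also have "\<dots> = (\<Sum>j\<le>D. sc (t ^ j) (nceval sc d j n (nc_component j) X a b))"
      using f_eq_sum_nc_component[OF ab, of "scale_tuple t X"] D by (simp add: nceval_scale)
    finally show "(\<Sum>j\<le>D. sc (t ^ j) (nceval sc d j n (gs j) X a b)) =
        (\<Sum>j\<le>D. sc (t ^ j) (nceval sc d j n (nc_component j) X a b))" .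
  qed
next
  case False
  hence "case L n of None \<Rightarrow> True | Some D \<Rightarrow> D < j"
    by (cases "L n") auto
  hence "nc_vanishes sc d j n (gs j)" "nc_vanishes sc d j n (nc_component j)"
    using vanish nc_component_vanishes by simp_all
  thus ?thesis using ab unfolding nc_vanishes_def by simp
qed

lemma nc_component_unique:
  assumes "\<forall>j. hom_ncpoly d j (gs j)"
    and "\<forall>n j. (case L n of None \<Rightarrow> True | Some D \<Rightarrow> D < j) \<longrightarrow> nc_vanishes sc d j n (gs j)"
    and "\<forall>n X. \<forall>a<n. \<forall>b<n. f n X a b =
            (case L n of None \<Rightarrow> 0 | Some D \<Rightarrow> \<Sum>j\<le>D. nceval sc d j n (gs j) X a b)"
  shows "gs = nc_component"
proof
  fix j
  show "gs j = nc_component j"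
    by (rule hom_ncpoly_eqI[OF _ nc_component_hom], use assms in simp)
      (rule nceval_component_unique, use assms in auto)
qed

end

theorem theorem6p4:
  fixes sc :: "'k::field \<Rightarrow> 'n::ab_group_add \<Rightarrow> 'n"
    and d :: nat
    and f :: "nat \<Rightarrow> (nat \<Rightarrow> nat \<Rightarrow> nat \<Rightarrow> 'k) \<Rightarrow> nat \<Rightarrow> nat \<Rightarrow> 'n"
    and L :: "nat \<Rightarrow> nat option"
  assumes "infinite (UNIV :: 'k set)"
    and "Vector_Spaces.vector_space sc"
    and "nc_function sc d f"
    and "\<forall>n. is_poly_fun_deg sc d n (f n) (L n)"
  shows "\<exists>!fs :: nat \<Rightarrow> nat list \<Rightarrow> 'n.
           (\<forall>j. hom_ncpoly d j (fs j)) \<and>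
           (\<forall>n. (\<forall>j. (case L n of None \<Rightarrow> True | Some D \<Rightarrow> D < j) \<longrightarrow> nc_vanishes sc d j n (fs j)) \<and>
                (\<forall>D. L n = Some D \<longrightarrow> \<not> nc_vanishes sc d D n (fs D)) \<and>
                (\<forall>X. \<forall>a<n. \<forall>b<n. f n X a b =
                   (case L n of None \<Rightarrow> 0 | Some D \<Rightarrow> \<Sum>j\<le>D. nceval sc d j n (fs j) X a b)))"
proof -
  interpret vector_space sc by fact
  interpret polynomial_nc_function sc d f L by unfold_locales fact+
  show ?thesis
  proof (rule ex1I[where a = nc_component], goal_cases)
    case 1
    show ?case
      by (simp add: nc_component_hom nc_component_vanishes nc_component_not_vanishes
          f_eq_sum_nc_component)
  next
    case (2 gs)
    then show ?case by (intro nc_component_unique) auto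
  qed
qed

end
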